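(* For every circuit $c\in\mathsf{ACirc}$, $[\![c]\!]_{op}=\kappa(\iota([\![c]\!]))$.
   Context: Fix a field $k$. Circuits: terms built from generators with sorts: copier $\Delta:(1,2)$, discard $!:(1,0)$, amplifier $\mathsf{s}_r:(1,1)$ ($r\in k$), register $\mathsf{x}:(1,1)$, adder $+:(2,1)$, zero $0:(0,1)$, one $\mathbf{1}:(0,1)$; mirror images $\Delta^{op}:(2,1)$, $!^{op}:(0,1)$, $\mathsf{s}_r^{op}$, $\mathsf{x}^{op}:(1,1)$, $+^{op}:(1,2)$, $0^{op}:(1,0)$, $\mathbf{1}^{op}:(1,0)$; $\mathrm{id}_0:(0,0)$, $\mathrm{id}_1:(1,1)$, $\mathrm{sw}:(2,2)$; closed under sequential composition $;$ and parallel composition $\oplus$; $\mathsf{ACirc}$ is the resulting prop (modulo symmetric monoidal laws). Denotation: $k(x)$ is the field of polynomial fractions over $k$; $[\![c]\!]\subseteq k(x)^n\times k(x)^m$ with $[\![\Delta]\!]=\{(p,(p,p))\}$, $[\![!]\!]=\{(p,\bullet)\}$, $[\![+]\!]=\{((p,q),p+q)\}$, $[\![0]\!]=\{(\bullet,0)\}$, $[\![\mathbf 1]\!]=\{(\bullet,1)\}$, $[\![\mathsf s_r]\!]=\{(p,rp)\}$, $[\![\mathsf x]\!]=\{(p,px)\}$; mirrored generators denote converse relations; $\mathrm{id}_1,\mathrm{sw},\mathrm{id}_0$ denote identity, swap, $\{(\bullet,\bullet)\}$; $;$ is relational composition and $\oplus$ product of relations. Each $[\![c]\!]$ is an affine relation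 (empty, or a translate of a $k(x)$-linear subspace). Operational semantics: states are circuits with a value of $k$ in each register; initial state $c_0$ stores $0$. Transitions $t\vdash c\xrightarrow[w]{v}c'$ at time $t\in\mathbb Z$: $\Delta$: $a/(a,a)$; $!$: $a/\bullet$; $+$: $(a,b)/a+b$; $0$: $\bullet/0$; $\mathsf s_r$: $a/ra$; $\mathsf x$ storing $b$: $a/b$, then stores $a$; $\mathbf 1$: $\bullet/1$ if $t=0$, $\bullet/0$ if $t\ne0$; mirrored generators: same with left/right exchanged; $\mathrm{id}_1$: $a/a$; $\mathrm{sw}$: $(a,b)/(b,a)$; $\mathrm{id}_0$: $\bullet/\bullet$; in $c;d$ the components move at the same time agreeing on the shared middle label; in $c\oplus d$ they move at the same time with labels concatenated. A computation starting at $t\le 0$ is a sequence of transitions from $c_0$ at times $t,t+1,\dots$. An $(n,m)$-trajectory is $\sigma:\mathbb Z\to k^n\times k^m$ that is $(0,0)$ for all sufficiently small indices. $[\![c]\!]_{op}$ is the set of trajectories of infinite computations: $\sigma(i)=(u_i,v_i)$ (labels of the transition at time $i$) for $i\ge t$, and $(0,0)$ for $i<t$. Laurent series: $k((x))$ is the field of maps $\alpha:\mathbb Z\to k$ with $\alpha(i)=0$ for all sufficiently small $i$, pointwise sum and convolution product; $k(x)$ embeds in $k((x))$ (a polynomial as its coefficient sequence, fractions via inverses in $k((x))$). $\iota$ sends $\emptyset$ to $\emptyset$ and an affine relation $a+L\subseteq k(x)^n\times k(x)^m$ to the affine relation $a+\mathrm{span}_{k((x))}(L)\subseteq k((x))^n\times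 k((x))^m$ (via the embedding). $\kappa$ sends a pair $(u,v)$, $u=(\alpha^1,\dots,\alpha^n)\in k((x))^n$, $v=(\beta^1,\dots,\beta^m)\in k((x))^m$, to the trajectory $i\mapsto((\alpha^1(i),\dots,\alpha^n(i)),(\beta^1(i),\dots,\beta^m(i)))$, and is extended to sets elementwise. *)

theory Defs
  imports "HOL-Computational_Algebra.Fraction_Field"
          "HOL-Computational_Algebra.Formal_Laurent_Series"
          "HOL-Computational_Algebra.Polynomial_FPS"
begin

datatype 'k circ =
    Copy | Disc | Amp 'k | Reg | Add | Zero | One
  | CopyOp | DiscOp | AmpOp 'k | RegOp | AddOp | ZeroOp | OneOp
  | Id0 | Id1 | Sw
  | Seq "'k circ" "'k circ"
  | Par "'k circ" "'k circ"

fun sort :: "'k circ \<Rightarrow> (nat \<times> nat) option" where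
  "sort Copy = Some (1,2)"
| "sort Disc = Some (1,0)"
| "sort (Amp r) = Some (1,1)"
| "sort Reg = Some (1,1)"
| "sort Add = Some (2,1)"
| "sort Zero = Some (0,1)"
| "sort One = Some (0,1)"
| "sort CopyOp = Some (2,1)"
| "sort DiscOp = Some (0,1)"
| "sort (AmpOp r) = Some (1,1)"
| "sort RegOp = Some (1,1)"
| "sort AddOp = Some (1,2)"
| "sort ZeroOp = Some (1,0)"
| "sort OneOp = Some (1,0)"
| "sort Id0 = Some (0,0)"
| "sort Id1 = Some (1,1)"
| "sort Sw = Some (2,2)"
| "sort (Seq c d) = (case (sort c, sort d) of
      (Some (n,m), Some (m',l)) \<Rightarrow> (if m = m' then Some (n,l) else None)
    | _ \<Rightarrow> None)"
| "sort (Par c d) = (case (sort c, sort d) of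
      (Some (n,m), Some (n',m')) \<Rightarrow> Some (n+n', m+m')
    | _ \<Rightarrow> None)"

definition rel_seq :: "('a list \<times> 'a list) set \<Rightarrow> ('a list \<times> 'a list) set \<Rightarrow> ('a list \<times> 'a list) set" where
  "rel_seq R S = {(u,w). \<exists>v. (u,v) \<in> R \<and> (v,w) \<in> S}"

definition rel_par :: "('a list \<times> 'a list) set \<Rightarrow> ('a list \<times> 'a list) set \<Rightarrow> ('a list \<times> 'a list) set" where
  "rel_par R S = {(u1 @ u2, v1 @ v2) | u1 u2 v1 v2. (u1,v1) \<in> R \<and> (u2,v2) \<in> S}"

type_synonym 'k ratfun = "'k poly fract"

fun den :: "'k::field circ \<Rightarrow> ('k ratfun list \<times> 'k ratfun list) set" where
  "den Copy = {([p],[p,p]) | p. True}"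
| "den Disc = {([p],[]) | p. True}"
| "den (Amp r) = {([p],[Fraction_Field.Fract [:r:] 1 * p]) | p. True}"
| "den Reg = {([p],[p * Fraction_Field.Fract [:0,1:] 1]) | p. True}"
| "den Add = {([p,q],[p+q]) | p q. True}"
| "den Zero = {([],[0])}"
| "den One = {([],[1])}"
| "den CopyOp = {([p,p],[p]) | p. True}"
| "den DiscOp = {([],[p]) | p. True}"
| "den (AmpOp r) = {([Fraction_Field.Fract [:r:] 1 * p],[p]) | p. True}"
| "den RegOp = {([p * Fraction_Field.Fract [:0,1:] 1],[p]) | p. True}"
| "den AddOp = {([p+q],[p,q]) | p q. True}"
| "den ZeroOp = {([0],[])}"
| "den OneOp = {([1],[])}"
| "den Id0 = {([],[])}"
| "den Id1 = {([p],[p]) | p. True}"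
| "den Sw = {([p,q],[q,p]) | p q. True}"
| "den (Seq c d) = rel_seq (den c) (den d)"
| "den (Par c d) = rel_par (den c) (den d)"

text \<open>The library type 'k fls is exactly the field of maps int to k vanishing
  for all sufficiently small indices, with convolution product.\<close>

definition poly_to_fls :: "'k::field poly \<Rightarrow> 'k fls" where
  "poly_to_fls p = fps_to_fls (fps_of_poly p)"

definition ratfun_to_fls :: "'k::field ratfun \<Rightarrow> 'k fls" where
  "ratfun_to_fls q = (THE f. \<exists>p r. r \<noteq> 0 \<and> q = Fraction_Field.Fract p r \<and> f = poly_to_fls p / poly_to_fls r)"

definition emb_pair :: "'k::field ratfun list \<times> 'k ratfun list \<Rightarrow> 'k fls list \<times> 'k fls list" where
  "emb_pair x = (map ratfun_to_fls (fst x), map ratfun_to_fls (snd x))"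

definition vadd :: "'a::plus list \<times> 'a list \<Rightarrow> 'a list \<times> 'a list \<Rightarrow> 'a list \<times> 'a list" where
  "vadd x y = (map2 (+) (fst x) (fst y), map2 (+) (snd x) (snd y))"

definition vdiff :: "'a::minus list \<times> 'a list \<Rightarrow> 'a list \<times> 'a list \<Rightarrow> 'a list \<times> 'a list" where
  "vdiff x y = (map2 (-) (fst x) (fst y), map2 (-) (snd x) (snd y))"

definition vscale :: "'a::times \<Rightarrow> 'a list \<times> 'a list \<Rightarrow> 'a list \<times> 'a list" where
  "vscale c x = (map ((*) c) (fst x), map ((*) c) (snd x))"

definition vzero :: "nat \<Rightarrow> nat \<Rightarrow> 'a::zero list \<times> 'a list" where
  "vzero n m = (replicate n 0, replicate m 0)"

definition lin_comb :: "nat \<Rightarrow> nat \<Rightarrow> nat \<Rightarrow> (nat \<Rightarrow> 'a::comm_ring_1) \<Rightarrow> (nat \<Rightarrow> 'a list \<times> 'a list) \<Rightarrow> 'a list \<times> 'a list" where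
  "lin_comb n m N c w = foldr (\<lambda>i acc. vadd (vscale (c i) (w i)) acc) [0..<N] (vzero n m)"

text \<open>iota: an affine relation R = a + L over k(x) (with a in R, L = {r - a | r in R})
  is sent to a + span over k((x)) of the embedded L; the empty relation to empty.\<close>
definition iota :: "nat \<Rightarrow> nat \<Rightarrow> ('k::field ratfun list \<times> 'k ratfun list) set
                     \<Rightarrow> ('k fls list \<times> 'k fls list) set" where
  "iota n m R = {z. \<exists>a \<in> R. \<exists>N c r. (\<forall>i<N. r i \<in> R) \<and>
      z = vadd (emb_pair a) (lin_comb n m N c (\<lambda>i. emb_pair (vdiff (r i) a)))}"

definition kappa :: "'k::zero fls list \<times> 'k fls list \<Rightarrow> (int \<Rightarrow> 'k list \<times> 'k list)" where
  "kappa x = (\<lambda>i. (map (\<lambda>\<alpha>. fls_nth \<alpha> i) (fst x), map (\<lambda>\<beta>. fls_nth \<beta> i) (snd x)))"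

text \<open>A state of a circuit c is
  c together with a value in each register; we represent it by the list of the
  register values in left-to-right order of the syntax tree.\<close>
fun nregs :: "'k circ \<Rightarrow> nat" where
  "nregs Reg = 1"
| "nregs RegOp = 1"
| "nregs (Seq c d) = nregs c + nregs d"
| "nregs (Par c d) = nregs c + nregs d"
| "nregs _ = 0"

text \<open>step c t s u v s': at time t, the circuit c in register state s makes a
  transition with left label u, right label v, to register state s'.\<close>
inductive step :: "'k::field circ \<Rightarrow> int \<Rightarrow> 'k list \<Rightarrow> 'k list \<Rightarrow> 'k list \<Rightarrow> 'k list \<Rightarrow> bool" where
  s_Copy: "step Copy t [] [a] [a,a] []"
| s_Disc: "step Disc t [] [a] [] []"
| s_Add: "step Add t [] [a,b] [a+b] []"
| s_Zero: "step Zero t [] [] [0] []"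
| s_Amp: "step (Amp r) t [] [a] [r*a] []"
| s_Reg: "step Reg t [b] [a] [b] [a]"
| s_One: "step One t [] [] [if t = 0 then 1 else 0] []"
| s_CopyOp: "step CopyOp t [] [a,a] [a] []"
| s_DiscOp: "step DiscOp t [] [] [a] []"
| s_AddOp: "step AddOp t [] [a+b] [a,b] []"
| s_ZeroOp: "step ZeroOp t [] [0] [] []"
| s_AmpOp: "step (AmpOp r) t [] [r*a] [a] []"
| s_RegOp: "step RegOp t [b] [b] [a] [a]"
| s_OneOp: "step OneOp t [] [if t = 0 then 1 else 0] [] []"
| s_Id0: "step Id0 t [] [] [] []"
| s_Id1: "step Id1 t [] [a] [a] []"
| s_Sw: "step Sw t [] [a,b] [b,a] []"
| s_Seq: "step c t s1 u w s1' \<Longrightarrow> step d t s2 w v s2' \<Longrightarrow>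
          step (Seq c d) t (s1 @ s2) u v (s1' @ s2')"
| s_Par: "step c t s1 u1 v1 s1' \<Longrightarrow> step d t s2 u2 v2 s2' \<Longrightarrow>
          step (Par c d) t (s1 @ s2) (u1 @ u2) (v1 @ v2) (s1' @ s2')"

definition op_sem :: "nat \<Rightarrow> nat \<Rightarrow> 'k::field circ \<Rightarrow> (int \<Rightarrow> 'k list \<times> 'k list) set" where
  "op_sem n m c = {\<sigma>. \<exists>t \<le> 0. \<exists>S U V.
      S t = replicate (nregs c) 0 \<and>
      (\<forall>i \<ge> t. step c i (S i) (U i) (V i) (S (i+1))) \<and>
      \<sigma> = (\<lambda>i. if i < t then vzero n m else (U i, V i))}"

end

(*
  Both semantics are compositional and they agree on the generators, so the theorem follows by
  induction on the circuit.

  Operationally, sequential and parallel composition act on trajectories pointwise in time, and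
  kappa, which reads off coefficients, turns the composition of relations over k((x)) into
  these pointwise compositions.

  Denotationally, the point is that iota commutes with both compositions. Present an affine
  relation of sort (n, m) as the port vectors of an affine set of vectors. Then parallel
  composition is a product of such sets, and sequential composition is a product intersected
  with the linear constraints that identify the shared ports, followed by a projection.
  Extension of scalars from k(x) to k((x)) commutes with products and projections, and also
  with intersecting by a hyperplane defined over k(x): project along a direction of the affine
  set that leaves the hyperplane.

  The register is the only generator with memory; it delays its input by one time step, which
  is multiplication by x.
*)
theory Submission
  imports Defs
begin

section \<open>Extension of scalars for affine sets of vectors\<close>

definition affine_closed :: "('i \<Rightarrow> 'a::field) set \<Rightarrow> bool" where
  "affine_closed X \<longleftrightarrow> (\<forall>a\<in>X. \<forall>y\<in>X. \<forall>z\<in>X. \<forall>l. (\<lambda>j. a j + l * (y j - z j)) \<in> X)"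

lemma affine_closedD:
  "affine_closed X \<Longrightarrow> a \<in> X \<Longrightarrow> y \<in> X \<Longrightarrow> z \<in> X \<Longrightarrow> (\<lambda>j. a j + l * (y j - z j)) \<in> X"
  unfolding affine_closed_def by blast

lemma affine_closed_Int: "affine_closed X \<Longrightarrow> affine_closed Y \<Longrightarrow> affine_closed (X \<inter> Y)"
  unfolding affine_closed_def by blast

lemma affine_closed_coords_eq: "affine_closed {x. \<forall>k<(m::nat). x (p k) = x (q k)}"
  unfolding affine_closed_def by auto

lemma affine_closed_reindex: "affine_closed X \<Longrightarrow> affine_closed ((\<lambda>x. x \<circ> \<tau>) ` X)"
  unfolding affine_closed_def by (fastforce simp: image_iff comp_def)

definition sum_vecs :: "('i \<Rightarrow> 'a) set \<Rightarrow> ('j \<Rightarrow> 'a) set \<Rightarrow> ('i + 'j \<Rightarrow> 'a) set" where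
  "sum_vecs A B = (\<lambda>(x, y). case_sum x y) ` (A \<times> B)"

lemma sum_vecsE:
  assumes "z \<in> sum_vecs A B"
  obtains x y where "x \<in> A" "y \<in> B" "z = case_sum x y"
  using assms unfolding sum_vecs_def by auto

lemma case_sum_in_sum_vecs [intro]: "x \<in> A \<Longrightarrow> y \<in> B \<Longrightarrow> case_sum x y \<in> sum_vecs A B"
  unfolding sum_vecs_def by force

lemma affine_closed_sum_vecs:
  assumes "affine_closed A" "affine_closed B"
  shows "affine_closed (sum_vecs A B)"
  unfolding affine_closed_def
proof (intro ballI allI)
  fix a y z l assume "a \<in> sum_vecs A B" "y \<in> sum_vecs A B" "z \<in> sum_vecs A B"
  then obtain a1 a2 y1 y2 z1 z2 where
    "a1 \<in> A" "y1 \<in> A" "z1 \<in> A" "a2 \<in> B" "y2 \<in> B" "z2 \<in> B"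
    and eqs: "a = case_sum a1 a2" "y = case_sum y1 y2" "z = case_sum z1 z2"
    by (metis sum_vecsE)
  then have "case_sum (\<lambda>j. a1 j + l * (y1 j - z1 j)) (\<lambda>j. a2 j + l * (y2 j - z2 j)) \<in> sum_vecs A B"
    using assms by (intro case_sum_in_sum_vecs affine_closedD)
  moreover have "(\<lambda>j. a j + l * (y j - z j)) =
      case_sum (\<lambda>j. a1 j + l * (y1 j - z1 j)) (\<lambda>j. a2 j + l * (y2 j - z2 j))"
    unfolding eqs by (rule ext) (simp split: sum.split)
  ultimately show "(\<lambda>j. a j + l * (y j - z j)) \<in> sum_vecs A B" by simp
qed

definition translated_span :: "('i \<Rightarrow> 'a::comm_ring) \<Rightarrow> (nat \<Rightarrow> 'i \<Rightarrow> 'a) \<Rightarrow> nat \<Rightarrow> ('i \<Rightarrow> 'a) set" where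
  "translated_span b B P = range (\<lambda>t j. b j + (\<Sum>k<P. t k * B k j))"

lemma translated_spanI: "(\<lambda>j. b j + (\<Sum>k<P. t k * B k j)) \<in> translated_span b B P"
  unfolding translated_span_def by (rule rangeI)

lemma translated_spanE:
  assumes "x \<in> translated_span b B P"
  obtains t where "x = (\<lambda>j. b j + (\<Sum>k<P. t k * B k j))"
  using assms unfolding translated_span_def by blast

lemma affine_closed_translated_span: "affine_closed (translated_span b B P)"
  unfolding affine_closed_def
proof (intro ballI allI)
  fix x y z l
  assume "x \<in> translated_span b B P" "y \<in> translated_span b B P" "z \<in> translated_span b B P"
  then obtain tx ty tz where "x = (\<lambda>j. b j + (\<Sum>k<P. tx k * B k j))"
    "y = (\<lambda>j. b j + (\<Sum>k<P. ty k * B k j))" "z = (\<lambda>j. b j + (\<Sum>k<P. tz k * B k j))"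
    by (elim translated_spanE)
  moreover have "(\<lambda>j. b j + (\<Sum>k<P. tx k * B k j)
      + l * ((b j + (\<Sum>k<P. ty k * B k j)) - (b j + (\<Sum>k<P. tz k * B k j))))
    = (\<lambda>j. b j + (\<Sum>k<P. (tx k + l * (ty k - tz k)) * B k j))"
    by (simp add: algebra_simps sum.distrib sum_distrib_left sum_subtractf)
  ultimately have "(\<lambda>j. x j + l * (y j - z j)) = (\<lambda>j. b j + (\<Sum>k<P. (tx k + l * (ty k - tz k)) * B k j))"
    by simp
  then show "(\<lambda>j. x j + l * (y j - z j)) \<in> translated_span b B P"
    by (simp only: translated_spanI)
qed

lemma translated_span_0: "translated_span b B 0 = {b}"
  by (simp add: translated_span_def)

lemma translated_span_1: "translated_span b B 1 = {\<lambda>j. b j + t * B 0 j | t. True}"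
proof (intro equalityI subsetI)
  fix x assume "x \<in> translated_span b B 1"
  then obtain t where "x = (\<lambda>j. b j + (\<Sum>k<1. t k * B k j))" by (rule translated_spanE)
  then show "x \<in> {\<lambda>j. b j + t * B 0 j | t. True}" by (intro CollectI exI[of _ "t 0"]) simp
next
  fix x assume "x \<in> {\<lambda>j. b j + t * B 0 j | t. True}"
  then obtain u where "x = (\<lambda>j. b j + u * B 0 j)" by blast
  then show "x \<in> translated_span b B 1"
    using translated_spanI[where b = b and B = B and P = 1 and t = "\<lambda>_. u"] by simp
qed

lemma translated_span_2: "translated_span b B 2 = {\<lambda>j. b j + t * B 0 j + u * B 1 j | t u. True}"
proof (intro equalityI subsetI)
  fix x assume "x \<in> translated_span b B 2"
  then obtain t where "x = (\<lambda>j. b j + (\<Sum>k<2. t k * B k j))" by (rule translated_spanE)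
  then show "x \<in> {\<lambda>j. b j + t * B 0 j + u * B 1 j | t u. True}"
    by (intro CollectI exI[of _ "t 0"] exI[of _ "t 1"]) (simp add: numeral_2_eq_2 add.assoc)
next
  fix x assume "x \<in> {\<lambda>j. b j + t * B 0 j + u * B 1 j | t u. True}"
  then obtain t u where "x = (\<lambda>j. b j + t * B 0 j + u * B 1 j)" by blast
  then show "x \<in> translated_span b B 2"
    using translated_spanI[where b = b and B = B and P = 2 and t = "\<lambda>k. if k = 0 then t else u"]
    by (simp add: numeral_2_eq_2 add.assoc)
qed

lemma obtain_preimages:
  assumes "\<forall>k<(N::nat). r k \<in> f ` X"
  obtains r' where "\<forall>k<N. r' k \<in> X \<and> r k = f (r' k)"
proof -
  have "\<forall>k. \<exists>x. k < N \<longrightarrow> x \<in> X \<and> r k = f x" using assms by blast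
  then show ?thesis using that by (metis (full_types) choice)
qed

locale field_hom =
  fixes hom :: "'a::field \<Rightarrow> 'b::field"
  assumes hom_add: "hom (x + y) = hom x + hom y"
    and hom_mult: "hom (x * y) = hom x * hom y"
    and hom_one [simp]: "hom 1 = 1"
begin

lemma hom_zero [simp]: "hom 0 = 0"
  by (metis add.right_neutral add_left_cancel hom_add)

lemma hom_uminus: "hom (- x) = - hom x"
  by (metis add.right_inverse hom_add hom_zero minus_unique)

lemma hom_diff: "hom (x - y) = hom x - hom y"
  using hom_add[of x "- y"] by (simp add: hom_uminus)

lemma hom_sum: "hom (\<Sum>i\<in>A. f i) = (\<Sum>i\<in>A. hom (f i))"
  by (induction A rule: infinite_finite_induct) (simp_all add: hom_add)

lemma hom_eq_0_iff: "hom x = 0 \<longleftrightarrow> x = 0"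
proof
  assume "hom x = 0"
  then have "hom (x * inverse x) = 0" by (simp add: hom_mult)
  then show "x = 0" by (metis hom_one right_inverse zero_neq_one)
qed simp

lemma hom_inverse: "hom (inverse x) = inverse (hom x)"
proof (cases "x = 0")
  case False
  then have "hom x * hom (inverse x) = 1" by (metis hom_mult hom_one right_inverse)
  then show ?thesis by (metis inverse_unique)
qed simp

lemma hom_divide: "hom (x / y) = hom x / hom y"
  by (simp add: divide_inverse hom_mult hom_inverse)

text \<open>For an affine set X = a + L this is hom a + span (hom L) over the large field: on vectors,
  the map iota of the paper.\<close>
definition ext_hull :: "('i \<Rightarrow> 'a::field) set \<Rightarrow> ('i \<Rightarrow> 'b::field) set" where
  "ext_hull X = {g. \<exists>a\<in>X. \<exists>(N::nat) c r. (\<forall>k<N. r k \<in> X) \<and>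
     g = (\<lambda>j. hom (a j) + (\<Sum>k<N. c k * hom (r k j - a j)))}"

lemma ext_hullI:
  assumes "a \<in> X" "\<forall>k<(N::nat). r k \<in> X"
  shows "(\<lambda>j. hom (a j) + (\<Sum>k<N. c k * hom (r k j - a j))) \<in> ext_hull X"
  using assms unfolding ext_hull_def by blast

lemma ext_hullE:
  assumes "g \<in> ext_hull X"
  obtains a and N :: nat and r and c where "a \<in> X" "\<forall>k<N. r k \<in> X"
    "g = (\<lambda>j. hom (a j) + (\<Sum>k<N. c k * hom (r k j - a j)))"
  using assms unfolding ext_hull_def by blast

lemma ext_hull_mono: "X \<subseteq> Y \<Longrightarrow> ext_hull X \<subseteq> ext_hull Y"
  unfolding ext_hull_def by (smt (verit) Collect_mono_iff subset_iff)

lemma ext_hull_coords_eq: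
  assumes "\<And>x. x \<in> X \<Longrightarrow> x p = x q" and "g \<in> ext_hull X"
  shows "g p = g q"
  using assms(2)
proof (rule ext_hullE)
  fix a N c r assume "a \<in> X" "\<forall>k<N. r k \<in> X"
    and "g = (\<lambda>j. hom (a j) + (\<Sum>k<N. c k * hom (r k j - a j)))"
  moreover have "a p = a q" "\<And>k. k < N \<Longrightarrow> r k p = r k q"
    using assms(1) \<open>a \<in> X\<close> \<open>\<forall>k<N. r k \<in> X\<close> by auto
  ultimately show "g p = g q" by simp
qed

lemma ext_hull_reindex: "ext_hull ((\<lambda>x. x \<circ> \<tau>) ` X) = (\<lambda>g. g \<circ> \<tau>) ` ext_hull X"
proof
  show "ext_hull ((\<lambda>x. x \<circ> \<tau>) ` X) \<subseteq> (\<lambda>g. g \<circ> \<tau>) ` ext_hull X"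
  proof
    fix g assume "g \<in> ext_hull ((\<lambda>x. x \<circ> \<tau>) ` X)"
    then obtain a and N :: nat and r and c where a: "a \<in> (\<lambda>x. x \<circ> \<tau>) ` X"
      and r: "\<forall>k<N. r k \<in> (\<lambda>x. x \<circ> \<tau>) ` X"
      and g: "g = (\<lambda>j. hom (a j) + (\<Sum>k<N. c k * hom (r k j - a j)))" by (rule ext_hullE)
    obtain a' where a': "a' \<in> X" "a = a' \<circ> \<tau>" using a by blast
    obtain r' where r': "\<forall>k<N. r' k \<in> X \<and> r k = r' k \<circ> \<tau>" using r by (rule obtain_preimages)
    have "g = (\<lambda>j. hom (a' j) + (\<Sum>k<N. c k * hom (r' k j - a' j))) \<circ> \<tau>"
      using r' unfolding g a' by (auto intro!: sum.cong)
    moreover have "(\<lambda>j. hom (a' j) + (\<Sum>k<N. c k * hom (r' k j - a' j))) \<in> ext_hull X"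
      using a' r' by (blast intro: ext_hullI)
    ultimately show "g \<in> (\<lambda>g. g \<circ> \<tau>) ` ext_hull X" by blast
  qed
  show "(\<lambda>g. g \<circ> \<tau>) ` ext_hull X \<subseteq> ext_hull ((\<lambda>x. x \<circ> \<tau>) ` X)"
  proof clarify
    fix g assume "g \<in> ext_hull X"
    then obtain a and N :: nat and r and c where "a \<in> X" "\<forall>k<N. r k \<in> X"
      and g: "g = (\<lambda>j. hom (a j) + (\<Sum>k<N. c k * hom (r k j - a j)))" by (rule ext_hullE)
    then have "a \<circ> \<tau> \<in> (\<lambda>x. x \<circ> \<tau>) ` X" "\<forall>k<N. r k \<circ> \<tau> \<in> (\<lambda>x. x \<circ> \<tau>) ` X"
      by auto
    then have "(\<lambda>j. hom ((a \<circ> \<tau>) j) + (\<Sum>k<N. c k * hom ((r k \<circ> \<tau>) j - (a \<circ> \<tau>) j)))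
        \<in> ext_hull ((\<lambda>x. x \<circ> \<tau>) ` X)"
      by (rule ext_hullI)
    then show "g \<circ> \<tau> \<in> ext_hull ((\<lambda>x. x \<circ> \<tau>) ` X)" by (simp add: g comp_def)
  qed
qed

lemma sum_lessThan_add: "(\<Sum>k<(M::nat) + N. f k) = (\<Sum>k<M. f k) + (\<Sum>k<N. f (M + k))"
  by (induction N) (simp_all add: add.assoc)

lemma sum_vecs_comp_Inl: "(\<lambda>z. z \<circ> Inl) ` sum_vecs A B \<subseteq> A"
  by (auto elim!: sum_vecsE simp: case_sum_o_inj)

lemma sum_vecs_comp_Inr: "(\<lambda>z. z \<circ> Inr) ` sum_vecs A B \<subseteq> B"
  by (auto elim!: sum_vecsE simp: case_sum_o_inj)

lemma case_sum_in_ext_hull: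
  assumes "g1 \<in> ext_hull A" "g2 \<in> ext_hull B"
  shows "case_sum g1 g2 \<in> ext_hull (sum_vecs A B)"
proof -
  obtain a1 and N1 :: nat and r1 and c1 where a1: "a1 \<in> A" and r1: "\<forall>k<N1. r1 k \<in> A"
    and g1: "g1 = (\<lambda>j. hom (a1 j) + (\<Sum>k<N1. c1 k * hom (r1 k j - a1 j)))"
    using assms(1) by (rule ext_hullE)
  obtain a2 and N2 :: nat and r2 and c2 where a2: "a2 \<in> B" and r2: "\<forall>k<N2. r2 k \<in> B"
    and g2: "g2 = (\<lambda>j. hom (a2 j) + (\<Sum>k<N2. c2 k * hom (r2 k j - a2 j)))"
    using assms(2) by (rule ext_hullE)
  define r where "r k = (if k < N1 then case_sum (r1 k) a2 else case_sum a1 (r2 (k - N1)))" for k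
  define c where "c k = (if k < N1 then c1 k else c2 (k - N1))" for k
  have g_eq: "case_sum g1 g2
      = (\<lambda>j. hom (case_sum a1 a2 j) + (\<Sum>k<N1 + N2. c k * hom (r k j - case_sum a1 a2 j)))"
  proof
    fix j
    have "(\<Sum>k<N1. c k * hom (r k j - case_sum a1 a2 j))
        = (\<Sum>k<N1. c1 k * hom (case_sum (r1 k) a2 j - case_sum a1 a2 j))"
      by (intro sum.cong) (simp_all add: r_def c_def)
    moreover have "(\<Sum>k<N2. c (N1 + k) * hom (r (N1 + k) j - case_sum a1 a2 j))
        = (\<Sum>k<N2. c2 k * hom (case_sum a1 (r2 k) j - case_sum a1 a2 j))"
      by (simp add: r_def c_def)
    ultimately show "case_sum g1 g2 j
        = hom (case_sum a1 a2 j) + (\<Sum>k<N1 + N2. c k * hom (r k j - case_sum a1 a2 j))"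
      unfolding sum_lessThan_add g1 g2 by (cases j) simp_all
  qed
  have "case_sum a1 a2 \<in> sum_vecs A B" "\<forall>k<N1 + N2. r k \<in> sum_vecs A B"
    using a1 a2 r1 r2 by (auto simp: r_def)
  then show ?thesis unfolding g_eq by (rule ext_hullI)
qed

lemma ext_hull_sum_vecs: "ext_hull (sum_vecs A B) = sum_vecs (ext_hull A) (ext_hull B)"
proof
  show "ext_hull (sum_vecs A B) \<subseteq> sum_vecs (ext_hull A) (ext_hull B)"
  proof
    fix g assume g: "g \<in> ext_hull (sum_vecs A B)"
    have "g \<circ> Inl \<in> (\<lambda>g. g \<circ> Inl) ` ext_hull (sum_vecs A B)" using g by (rule imageI)
    also have "\<dots> = ext_hull ((\<lambda>z. z \<circ> Inl) ` sum_vecs A B)" by (rule ext_hull_reindex[symmetric])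
    also have "\<dots> \<subseteq> ext_hull A" by (rule ext_hull_mono[OF sum_vecs_comp_Inl])
    finally have "g \<circ> Inl \<in> ext_hull A" .
    have "g \<circ> Inr \<in> (\<lambda>g. g \<circ> Inr) ` ext_hull (sum_vecs A B)" using g by (rule imageI)
    also have "\<dots> = ext_hull ((\<lambda>z. z \<circ> Inr) ` sum_vecs A B)" by (rule ext_hull_reindex[symmetric])
    also have "\<dots> \<subseteq> ext_hull B" by (rule ext_hull_mono[OF sum_vecs_comp_Inr])
    finally have "g \<circ> Inr \<in> ext_hull B" .
    have "case_sum (g \<circ> Inl) (g \<circ> Inr) \<in> sum_vecs (ext_hull A) (ext_hull B)"
      using \<open>g \<circ> Inl \<in> ext_hull A\<close> \<open>g \<circ> Inr \<in> ext_hull B\<close> by (rule case_sum_in_sum_vecs)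
    then show "g \<in> sum_vecs (ext_hull A) (ext_hull B)"
      by (simp only: case_sum_expand_Inr_pointfree[OF refl])
  qed
  show "sum_vecs (ext_hull A) (ext_hull B) \<subseteq> ext_hull (sum_vecs A B)"
  proof
    fix g assume "g \<in> sum_vecs (ext_hull A) (ext_hull B)"
    then obtain g1 g2 where "g1 \<in> ext_hull A" "g2 \<in> ext_hull B" and "g = case_sum g1 g2"
      by (rule sum_vecsE)
    then show "g \<in> ext_hull (sum_vecs A B)" by (simp add: case_sum_in_ext_hull)
  qed
qed

lemma hom_combination_diff:
  "hom (a p) + (\<Sum>k<N. c k * hom (r k p - a p)) - (hom (a q) + (\<Sum>k<N. c k * hom (r k q - a q)))
     = hom (a p - a q) + (\<Sum>k<N. c k * hom ((r k p - r k q) - (a p - a q)))"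
proof -
  have "hom (a p) + (\<Sum>k<N. c k * hom (r k p - a p)) - (hom (a q) + (\<Sum>k<N. c k * hom (r k q - a q)))
      = (hom (a p) - hom (a q)) + (\<Sum>k<N. c k * hom (r k p - a p) - c k * hom (r k q - a q))"
    unfolding sum_subtractf by simp
  also have "\<dots> = hom (a p - a q) + (\<Sum>k<N. c k * hom ((r k p - r k q) - (a p - a q)))"
    by (simp add: hom_add hom_diff algebra_simps)
  finally show ?thesis .
qed

text \<open>If some direction r k - a leaves the hyperplane, project X onto the hyperplane along it:
  the projection is an affine map defined over the small field, and it fixes g because g
  already lies on the hyperplane.\<close>
lemma ext_hull_Int_hyperplaneI:
  assumes X: "affine_closed X" and "g \<in> ext_hull X" and gpq: "g p = g q"
  shows "g \<in> ext_hull (X \<inter> {x. x p = x q})"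
proof -
  obtain a and N :: nat and r and c where a: "a \<in> X" and r: "\<forall>k<N. r k \<in> X"
    and g: "g = (\<lambda>j. hom (a j) + (\<Sum>k<N. c k * hom (r k j - a j)))"
    using assms(2) by (rule ext_hullE)
  define f where "f x = x p - x q" for x :: "_ \<Rightarrow> 'a"
  have "g p - g q = hom (f a) + (\<Sum>k<N. c k * hom (f (r k) - f a))"
    unfolding g f_def by (rule hom_combination_diff)
  with gpq have f_g: "hom (f a) + (\<Sum>k<N. c k * hom (f (r k) - f a)) = 0" by simp
  show ?thesis
  proof (cases "\<forall>k<N. f (r k) = f a")
    case True
    then have "f a = 0" using f_g by (simp add: hom_eq_0_iff)
    with True have "a \<in> X \<inter> {x. x p = x q}" "\<forall>k<N. r k \<in> X \<inter> {x. x p = x q}"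
      using a r by (auto simp: f_def)
    then show ?thesis unfolding g by (rule ext_hullI)
  next
    case False
    then obtain k0 where "k0 < N" and "f (r k0) \<noteq> f a" by blast
    define \<delta> where "\<delta> = f (r k0) - f a"
    have "\<delta> \<noteq> 0" using \<open>f (r k0) \<noteq> f a\<close> by (simp add: \<delta>_def)
    define \<pi> where "\<pi> y = (\<lambda>j. y j + (f y / \<delta>) * (a j - r k0 j))" for y
    have \<pi>_in: "\<pi> y \<in> X \<inter> {x. x p = x q}" if "y \<in> X" for y
    proof
      show "\<pi> y \<in> X" unfolding \<pi>_def using X that a r[rule_format, OF \<open>k0 < N\<close>] by (rule affine_closedD)
      show "\<pi> y \<in> {x. x p = x q}"
        using \<open>\<delta> \<noteq> 0\<close> by (simp add: \<pi>_def f_def \<delta>_def field_simps)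
    qed
    have "g j = hom (\<pi> a j) + (\<Sum>k<N. c k * hom (\<pi> (r k) j - \<pi> a j))" for j
    proof -
      define D where "D = hom (a j - r k0 j)"
      have "hom (\<pi> a j) + (\<Sum>k<N. c k * hom (\<pi> (r k) j - \<pi> a j))
          = hom (a j) + hom (f a) / hom \<delta> * D
            + (\<Sum>k<N. c k * (hom (r k j - a j) + hom (f (r k) - f a) / hom \<delta> * D))"
        unfolding \<pi>_def D_def
        by (simp add: hom_add hom_diff hom_mult hom_divide algebra_simps diff_divide_distrib)
      also have "\<dots> = g j + D / hom \<delta> * (hom (f a) + (\<Sum>k<N. c k * hom (f (r k) - f a)))"
        unfolding g by (simp add: algebra_simps sum.distrib sum_distrib_left sum_divide_distrib)
      also have "\<dots> = g j" using f_g by simp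
      finally show ?thesis by simp
    qed
    then have "g = (\<lambda>j. hom (\<pi> a j) + (\<Sum>k<N. c k * hom (\<pi> (r k) j - \<pi> a j)))" by blast
    moreover have "\<pi> a \<in> X \<inter> {x. x p = x q}" "\<forall>k<N. \<pi> (r k) \<in> X \<inter> {x. x p = x q}"
      using \<pi>_in a r by auto
    then have "(\<lambda>j. hom (\<pi> a j) + (\<Sum>k<N. c k * hom (\<pi> (r k) j - \<pi> a j)))
        \<in> ext_hull (X \<inter> {x. x p = x q})" by (rule ext_hullI)
    ultimately show ?thesis by simp
  qed
qed

lemma ext_hull_Int_hyperplane:
  assumes "affine_closed X"
  shows "ext_hull (X \<inter> {x. x p = x q}) = ext_hull X \<inter> {g. g p = g q}"
proof
  show "ext_hull (X \<inter> {x. x p = x q}) \<subseteq> ext_hull X \<inter> {g. g p = g q}"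
  proof
    fix g assume g: "g \<in> ext_hull (X \<inter> {x. x p = x q})"
    then have "g \<in> ext_hull X" using ext_hull_mono[of "X \<inter> {x. x p = x q}" X] by blast
    moreover have "g p = g q" using g by (rule ext_hull_coords_eq[rotated]) simp
    ultimately show "g \<in> ext_hull X \<inter> {g. g p = g q}" by simp
  qed
  show "ext_hull X \<inter> {g. g p = g q} \<subseteq> ext_hull (X \<inter> {x. x p = x q})"
  proof clarify
    fix g assume "g \<in> ext_hull X" "g p = g q"
    then show "g \<in> ext_hull (X \<inter> {x. x p = x q})" by (rule ext_hull_Int_hyperplaneI[OF assms])
  qed
qed

lemma ext_hull_Int_hyperplanes:
  assumes "affine_closed X"
  shows "ext_hull (X \<inter> {x. \<forall>k<(m::nat). x (p k) = x (q k)}) = ext_hull X \<inter> {g. \<forall>k<m. g (p k) = g (q k)}"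
proof (induction m)
  case (Suc m)
  let ?H = "\<lambda>m. {x. \<forall>k<m. x (p k) = x (q k)}"
  have "X \<inter> ?H (Suc m) = (X \<inter> ?H m) \<inter> {x. x (p m) = x (q m)}"
    by (auto simp: less_Suc_eq)
  moreover have "affine_closed (X \<inter> ?H m)"
    using assms affine_closed_coords_eq by (rule affine_closed_Int)
  ultimately show ?case using Suc.IH by (auto simp: ext_hull_Int_hyperplane less_Suc_eq)
qed simp

lemma ext_hull_translated_span_subset:
  "ext_hull (translated_span b B P) \<subseteq> translated_span (hom \<circ> b) (\<lambda>k. hom \<circ> B k) P"
proof
  fix g assume "g \<in> ext_hull (translated_span b B P)"
  then obtain a and N :: nat and r and c where a: "a \<in> translated_span b B P"
    and r: "\<forall>i<N. r i \<in> translated_span b B P"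
    and g: "g = (\<lambda>j. hom (a j) + (\<Sum>i<N. c i * hom (r i j - a j)))" by (rule ext_hullE)
  obtain ta where ta: "a = (\<lambda>j. b j + (\<Sum>k<P. ta k * B k j))"
    using a by (rule translated_spanE)
  obtain tr where tr: "\<forall>i<N. tr i \<in> UNIV \<and> r i = (\<lambda>j. b j + (\<Sum>k<P. tr i k * B k j))"
    using r unfolding translated_span_def by (rule obtain_preimages)
  define t where "t k = hom (ta k) + (\<Sum>i<N. c i * hom (tr i k - ta k))" for k
  have "g j = hom (b j) + (\<Sum>k<P. t k * hom (B k j))" for j
  proof -
    have "r i j - a j = (\<Sum>k<P. (tr i k - ta k) * B k j)" if "i < N" for i
      using tr that unfolding ta by (simp add: left_diff_distrib sum_subtractf)
    then have "g j = hom (b j) + (\<Sum>k<P. hom (ta k) * hom (B k j))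
        + (\<Sum>i<N. c i * (\<Sum>k<P. hom (tr i k - ta k) * hom (B k j)))"
      unfolding g ta by (simp add: hom_add hom_sum hom_mult)
    also have "\<dots> = hom (b j) + (\<Sum>k<P. t k * hom (B k j))"
      unfolding t_def
      by (simp add: distrib_right sum.distrib sum_distrib_left sum_distrib_right mult.assoc
          sum.swap[of _ "{..<N}"])
    finally show ?thesis .
  qed
  then have "g = (\<lambda>j. (hom \<circ> b) j + (\<Sum>k<P. t k * (hom \<circ> B k) j))" by auto
  then show "g \<in> translated_span (hom \<circ> b) (\<lambda>k. hom \<circ> B k) P"
    by (simp only: translated_spanI)
qed

lemma translated_span_subset_ext_hull:
  "translated_span (hom \<circ> b) (\<lambda>k. hom \<circ> B k) P \<subseteq> ext_hull (translated_span b B P)"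
proof
  fix g assume "g \<in> translated_span (hom \<circ> b) (\<lambda>k. hom \<circ> B k) P"
  then obtain t where g: "g = (\<lambda>j. (hom \<circ> b) j + (\<Sum>k<P. t k * (hom \<circ> B k) j))"
    by (rule translated_spanE)
  have "b \<in> translated_span b B P"
    using translated_spanI[where b=b and B=B and P=P and t="\<lambda>_. 0"] by simp
  moreover have "\<forall>i<P. (\<lambda>j. b j + B i j) \<in> translated_span b B P"
  proof (intro allI impI)
    fix i assume "i < P"
    then have "(\<Sum>k<P. (if k = i then 1 else 0) * B k j) = B i j" for j
    proof -
      have "(\<Sum>k<P. (if k = i then 1 else 0) * B k j) = (\<Sum>k<P. if k = i then B k j else 0)"
        by (rule sum.cong) simp_all
      then show ?thesis using \<open>i < P\<close> by simp
    qed
    then show "(\<lambda>j. b j + B i j) \<in> translated_span b B P"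
      using translated_spanI[where b=b and B=B and P=P and t="\<lambda>k. if k = i then 1 else 0"] by simp
  qed
  ultimately have "(\<lambda>j. hom (b j) + (\<Sum>i<P. t i * hom ((b j + B i j) - b j)))
      \<in> ext_hull (translated_span b B P)"
    by (rule ext_hullI)
  then show "g \<in> ext_hull (translated_span b B P)" by (simp add: g)
qed

lemma ext_hull_translated_span:
  "ext_hull (translated_span b B P) = translated_span (hom \<circ> b) (\<lambda>k. hom \<circ> B k) P"
  using ext_hull_translated_span_subset translated_span_subset_ext_hull by (rule equalityI)

end

section \<open>Port vectors and affine relations\<close>

lemma poly_to_fls_add: "poly_to_fls (p + q) = poly_to_fls p + poly_to_fls q"
  by (simp add: poly_to_fls_def fps_of_poly_add)

lemma poly_to_fls_mult: "poly_to_fls (p * q) = poly_to_fls p * poly_to_fls q"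
  by (simp add: poly_to_fls_def fps_of_poly_mult fls_times_fps_to_fls)

lemma poly_to_fls_eq_0_iff: "poly_to_fls p = 0 \<longleftrightarrow> p = 0"
  by (simp add: poly_to_fls_def)

lemma ratfun_to_fls_Fract:
  assumes "r \<noteq> 0"
  shows "ratfun_to_fls (Fraction_Field.Fract p r) = poly_to_fls p / poly_to_fls r"
  unfolding ratfun_to_fls_def
proof (rule the_equality)
  show "\<exists>p' r'. r' \<noteq> 0 \<and> Fraction_Field.Fract p r = Fraction_Field.Fract p' r' \<and>
      poly_to_fls p / poly_to_fls r = poly_to_fls p' / poly_to_fls r'"
    using assms by blast
next
  fix f assume "\<exists>p' r'. r' \<noteq> 0 \<and> Fraction_Field.Fract p r = Fraction_Field.Fract p' r' \<and>
      f = poly_to_fls p' / poly_to_fls r'"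
  then obtain p' r' where "r' \<noteq> 0" "Fraction_Field.Fract p r = Fraction_Field.Fract p' r'"
    and f: "f = poly_to_fls p' / poly_to_fls r'" by blast
  then have "poly_to_fls p * poly_to_fls r' = poly_to_fls p' * poly_to_fls r"
    using assms by (simp add: eq_fract poly_to_fls_mult[symmetric])
  then show "f = poly_to_fls p / poly_to_fls r"
    using \<open>r' \<noteq> 0\<close> assms by (simp add: f frac_eq_eq poly_to_fls_eq_0_iff mult.commute)
qed

interpretation ratfun_to_fls: field_hom ratfun_to_fls
proof
  fix x y :: "'a::field ratfun"
  obtain p r where "x = Fraction_Field.Fract p r" "r \<noteq> 0" by (rule Fract_cases)
  moreover obtain p' r' where "y = Fraction_Field.Fract p' r'" "r' \<noteq> 0" by (rule Fract_cases)
  ultimately show "ratfun_to_fls (x + y) = ratfun_to_fls x + ratfun_to_fls y"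
    and "ratfun_to_fls (x * y) = ratfun_to_fls x * ratfun_to_fls y"
    by (simp_all add: ratfun_to_fls_Fract poly_to_fls_add poly_to_fls_mult poly_to_fls_eq_0_iff
        field_simps)
next
  show "ratfun_to_fls 1 = 1"
    by (simp add: One_fract_def ratfun_to_fls_Fract poly_to_fls_def)
qed

lemma ratfun_to_fls_const: "ratfun_to_fls (Fraction_Field.Fract [:r:] 1) = fls_const r"
  by (simp add: ratfun_to_fls_Fract poly_to_fls_def fps_of_poly_const)

lemma ratfun_to_fls_X: "ratfun_to_fls (Fraction_Field.Fract [:0, 1:] 1) = fls_X"
  by (simp add: ratfun_to_fls_Fract poly_to_fls_def fps_of_poly_pCons)

text \<open>A vector on the ports of a circuit of sort (n, m): index Inl j is the j-th port on the
  left, Inr j the j-th port on the right; all other indices are ignored.\<close>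
definition of_ports :: "nat \<Rightarrow> nat \<Rightarrow> (nat + nat \<Rightarrow> 'a) \<Rightarrow> 'a list \<times> 'a list" where
  "of_ports n m x = (map (x \<circ> Inl) [0..<n], map (x \<circ> Inr) [0..<m])"

lemma vadd_of_ports: "vadd (of_ports n m x) (of_ports n m y) = of_ports n m (\<lambda>j. x j + y j)"
  by (simp add: vadd_def of_ports_def zip_map_map zip_same_conv_map)

lemma vdiff_of_ports: "vdiff (of_ports n m x) (of_ports n m y) = of_ports n m (\<lambda>j. x j - y j)"
  by (simp add: vdiff_def of_ports_def zip_map_map zip_same_conv_map)

lemma vscale_of_ports: "vscale c (of_ports n m x) = of_ports n m (\<lambda>j. c * x j)"
  by (simp add: vscale_def of_ports_def)

lemma vzero_of_ports: "vzero n m = of_ports n m (\<lambda>_. 0)"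
  by (simp add: vzero_def of_ports_def comp_def map_replicate_const)

lemma emb_pair_of_ports: "emb_pair (of_ports n m x) = of_ports n m (ratfun_to_fls \<circ> x)"
  by (simp add: emb_pair_def of_ports_def)

lemma lin_comb_cong:
  "(\<And>i. i < N \<Longrightarrow> w i = w' i) \<Longrightarrow> lin_comb n m N c w = lin_comb n m N c w'"
  unfolding lin_comb_def by (rule foldr_cong) auto

lemma lin_comb_of_ports:
  "lin_comb n m N c (\<lambda>i. of_ports n m (w i)) = of_ports n m (\<lambda>j. \<Sum>i<N. c i * w i j)"
proof -
  have "foldr (\<lambda>i acc. vadd (vscale (c i) (of_ports n m (w i))) acc) xs (vzero n m)
      = of_ports n m (\<lambda>j. \<Sum>i\<leftarrow>xs. c i * w i j)" for xs
    by (induction xs) (simp_all add: vzero_of_ports vscale_of_ports vadd_of_ports)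
  then show ?thesis
    by (simp add: lin_comb_def sum_list_distinct_conv_sum_set atLeast0LessThan)
qed

lemma iota_of_ports: "iota n m (of_ports n m ` X) = of_ports n m ` ratfun_to_fls.ext_hull X"
proof
  show "iota n m (of_ports n m ` X) \<subseteq> of_ports n m ` ratfun_to_fls.ext_hull X"
  proof
    fix z assume "z \<in> iota n m (of_ports n m ` X)"
    then obtain a and N :: nat and c r where a: "a \<in> of_ports n m ` X"
      and r: "\<forall>i<N. r i \<in> of_ports n m ` X"
      and z: "z = vadd (emb_pair a) (lin_comb n m N c (\<lambda>i. emb_pair (vdiff (r i) a)))"
      unfolding iota_def by blast
    obtain a' where a': "a' \<in> X" "a = of_ports n m a'" using a by (rule imageE) simp
    obtain r' where r': "\<forall>i<N. r' i \<in> X \<and> r i = of_ports n m (r' i)"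
      using r by (rule obtain_preimages)
    have "lin_comb n m N c (\<lambda>i. emb_pair (vdiff (r i) a))
        = lin_comb n m N c (\<lambda>i. of_ports n m (ratfun_to_fls \<circ> (\<lambda>j. r' i j - a' j)))"
      using r' by (intro lin_comb_cong) (simp add: a' vdiff_of_ports emb_pair_of_ports)
    then have "z = of_ports n m (\<lambda>j. ratfun_to_fls (a' j) + (\<Sum>i<N. c i * ratfun_to_fls (r' i j - a' j)))"
      unfolding z by (simp add: a' lin_comb_of_ports emb_pair_of_ports vadd_of_ports)
    moreover have "(\<lambda>j. ratfun_to_fls (a' j) + (\<Sum>i<N. c i * ratfun_to_fls (r' i j - a' j)))
        \<in> ratfun_to_fls.ext_hull X"
      using a' r' by (intro ratfun_to_fls.ext_hullI) auto
    ultimately show "z \<in> of_ports n m ` ratfun_to_fls.ext_hull X" by (rule image_eqI)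
  qed
  show "of_ports n m ` ratfun_to_fls.ext_hull X \<subseteq> iota n m (of_ports n m ` X)"
  proof
    fix z assume "z \<in> of_ports n m ` ratfun_to_fls.ext_hull X"
    then obtain g where "g \<in> ratfun_to_fls.ext_hull X" and z: "z = of_ports n m g" by blast
    from \<open>g \<in> ratfun_to_fls.ext_hull X\<close> obtain a and N :: nat and r c where "a \<in> X" "\<forall>i<N. r i \<in> X"
      and g: "g = (\<lambda>j. ratfun_to_fls (a j) + (\<Sum>i<N. c i * ratfun_to_fls (r i j - a j)))"
      by (rule ratfun_to_fls.ext_hullE)
    have "z = vadd (emb_pair (of_ports n m a))
        (lin_comb n m N c (\<lambda>i. emb_pair (vdiff (of_ports n m (r i)) (of_ports n m a))))"
      by (simp add: z g vdiff_of_ports emb_pair_of_ports lin_comb_of_ports vadd_of_ports comp_def)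
    moreover have "\<forall>i<N. of_ports n m (r i) \<in> of_ports n m ` X"
      using \<open>\<forall>i<N. r i \<in> X\<close> by auto
    ultimately have "\<exists>N c r'. (\<forall>i<N. r' i \<in> of_ports n m ` X) \<and>
        z = vadd (emb_pair (of_ports n m a)) (lin_comb n m N c (\<lambda>i. emb_pair (vdiff (r' i) (of_ports n m a))))"
      by (intro exI[of _ N] exI[of _ c] exI[of _ "\<lambda>i. of_ports n m (r i)"]) simp
    moreover have "of_ports n m a \<in> of_ports n m ` X" using \<open>a \<in> X\<close> by (rule imageI)
    ultimately show "z \<in> iota n m (of_ports n m ` X)"
      unfolding iota_def by blast
  qed
qed

lemma rel_seqI: "(u, v) \<in> R \<Longrightarrow> (v, w) \<in> S \<Longrightarrow> (u, w) \<in> rel_seq R S"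
  unfolding rel_seq_def by blast

lemma rel_seqE:
  assumes "p \<in> rel_seq R S"
  obtains u w v where "p = (u, w)" "(u, v) \<in> R" "(v, w) \<in> S"
  using assms unfolding rel_seq_def by blast

lemma rel_parI: "(u1, v1) \<in> R \<Longrightarrow> (u2, v2) \<in> S \<Longrightarrow> (u1 @ u2, v1 @ v2) \<in> rel_par R S"
  unfolding rel_par_def by blast

lemma rel_parE:
  assumes "p \<in> rel_par R S"
  obtains u1 u2 v1 v2 where "p = (u1 @ u2, v1 @ v2)" "(u1, v1) \<in> R" "(u2, v2) \<in> S"
  using assms unfolding rel_par_def by blast

lemma of_ports_seq:
  "of_ports n l (case_sum x y \<circ> map_sum Inl Inr) = (fst (of_ports n m x), snd (of_ports m l y))"
  by (simp add: of_ports_def comp_def)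

lemma snd_of_ports_eq_fst_of_ports_iff:
  "snd (of_ports n m x) = fst (of_ports m l y) \<longleftrightarrow> (\<forall>k<m. x (Inr k) = y (Inl k))"
  by (auto simp: of_ports_def)

lemma rel_seq_of_ports:
  "rel_seq (of_ports n m ` A) (of_ports m l ` B) = of_ports n l ` (\<lambda>z. z \<circ> map_sum Inl Inr) `
     (sum_vecs A B \<inter> {z. \<forall>k<m. z (Inl (Inr k)) = z (Inr (Inl k))})"
proof
  show "rel_seq (of_ports n m ` A) (of_ports m l ` B) \<subseteq> of_ports n l ` (\<lambda>z. z \<circ> map_sum Inl Inr) `
     (sum_vecs A B \<inter> {z. \<forall>k<m. z (Inl (Inr k)) = z (Inr (Inl k))})"
  proof
    fix p assume "p \<in> rel_seq (of_ports n m ` A) (of_ports m l ` B)"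
    then obtain u w v where p: "p = (u, v)" and uw: "(u, w) \<in> of_ports n m ` A"
      and wv: "(w, v) \<in> of_ports m l ` B"
      unfolding rel_seq_def by blast
    obtain x where "x \<in> A" and x: "(u, w) = of_ports n m x" using uw by blast
    obtain y where "y \<in> B" and y: "(w, v) = of_ports m l y" using wv by blast
    have "snd (of_ports n m x) = fst (of_ports m l y)" using x y by (metis fst_conv snd_conv)
    then have "case_sum x y \<in> sum_vecs A B \<inter> {z. \<forall>k<m. z (Inl (Inr k)) = z (Inr (Inl k))}"
      using \<open>x \<in> A\<close> \<open>y \<in> B\<close> by (auto simp: snd_of_ports_eq_fst_of_ports_iff)
    moreover have "p = of_ports n l (case_sum x y \<circ> map_sum Inl Inr)"
      using x y by (simp add: p of_ports_seq[where m = m] prod_eq_iff)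
    ultimately show "p \<in> of_ports n l ` (\<lambda>z. z \<circ> map_sum Inl Inr) `
        (sum_vecs A B \<inter> {z. \<forall>k<m. z (Inl (Inr k)) = z (Inr (Inl k))})" by blast
  qed
  show "of_ports n l ` (\<lambda>z. z \<circ> map_sum Inl Inr) `
      (sum_vecs A B \<inter> {z. \<forall>k<m. z (Inl (Inr k)) = z (Inr (Inl k))})
      \<subseteq> rel_seq (of_ports n m ` A) (of_ports m l ` B)"
  proof
    fix p assume "p \<in> of_ports n l ` (\<lambda>z. z \<circ> map_sum Inl Inr) `
      (sum_vecs A B \<inter> {z. \<forall>k<m. z (Inl (Inr k)) = z (Inr (Inl k))})"
    then obtain z where z: "z \<in> sum_vecs A B" "\<forall>k<m. z (Inl (Inr k)) = z (Inr (Inl k))"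
      and p: "p = of_ports n l (z \<circ> map_sum Inl Inr)" by blast
    from z(1) obtain x y where "x \<in> A" "y \<in> B" and xy: "z = case_sum x y" by (rule sum_vecsE)
    then have "snd (of_ports n m x) = fst (of_ports m l y)"
      using z(2) by (simp add: snd_of_ports_eq_fst_of_ports_iff)
    have "(fst (of_ports n m x), snd (of_ports n m x)) \<in> of_ports n m ` A"
      using \<open>x \<in> A\<close> by simp
    moreover have "(snd (of_ports n m x), snd (of_ports m l y)) \<in> of_ports m l ` B"
      using \<open>y \<in> B\<close> \<open>snd (of_ports n m x) = fst (of_ports m l y)\<close> by simp
    ultimately have "(fst (of_ports n m x), snd (of_ports m l y)) \<in> rel_seq (of_ports n m ` A) (of_ports m l ` B)"
      unfolding rel_seq_def by blast
    then show "p \<in> rel_seq (of_ports n m ` A) (of_ports m l ` B)"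
      by (simp add: p xy of_ports_seq[where m = m])
  qed
qed

definition par_ports :: "nat \<Rightarrow> nat \<Rightarrow> nat + nat \<Rightarrow> (nat + nat) + (nat + nat)" where
  "par_ports n1 m1 = case_sum
     (\<lambda>j. if j < n1 then Inl (Inl j) else Inr (Inl (j - n1)))
     (\<lambda>j. if j < m1 then Inl (Inr j) else Inr (Inr (j - m1)))"

lemma map_upt_add_eq_append:
  "map f [0..<a + b] = map f [0..<a] @ map (\<lambda>j. f (a + j)) [0..<b]"
  by (induction b) simp_all

lemma of_ports_par:
  "of_ports (n1 + n2) (m1 + m2) (case_sum x y \<circ> par_ports n1 m1)
     = (fst (of_ports n1 m1 x) @ fst (of_ports n2 m2 y), snd (of_ports n1 m1 x) @ snd (of_ports n2 m2 y))"
  by (simp add: of_ports_def map_upt_add_eq_append par_ports_def cong: map_cong)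

lemma rel_par_of_ports:
  "rel_par (of_ports n1 m1 ` A) (of_ports n2 m2 ` B)
     = of_ports (n1 + n2) (m1 + m2) ` (\<lambda>z. z \<circ> par_ports n1 m1) ` sum_vecs A B"
proof
  show "rel_par (of_ports n1 m1 ` A) (of_ports n2 m2 ` B)
      \<subseteq> of_ports (n1 + n2) (m1 + m2) ` (\<lambda>z. z \<circ> par_ports n1 m1) ` sum_vecs A B"
  proof
    fix p assume "p \<in> rel_par (of_ports n1 m1 ` A) (of_ports n2 m2 ` B)"
    then obtain u1 u2 v1 v2 where p: "p = (u1 @ u2, v1 @ v2)"
      and "(u1, v1) \<in> of_ports n1 m1 ` A" "(u2, v2) \<in> of_ports n2 m2 ` B"
      unfolding rel_par_def by blast
    then obtain x y where "x \<in> A" "y \<in> B"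
      and x: "(u1, v1) = of_ports n1 m1 x" and y: "(u2, v2) = of_ports n2 m2 y" by blast
    have "p = of_ports (n1 + n2) (m1 + m2) (case_sum x y \<circ> par_ports n1 m1)"
      using x y by (simp add: p of_ports_par prod_eq_iff)
    moreover have "case_sum x y \<in> sum_vecs A B" using \<open>x \<in> A\<close> \<open>y \<in> B\<close> by (rule case_sum_in_sum_vecs)
    ultimately show "p \<in> of_ports (n1 + n2) (m1 + m2) ` (\<lambda>z. z \<circ> par_ports n1 m1) ` sum_vecs A B"
      by blast
  qed
  show "of_ports (n1 + n2) (m1 + m2) ` (\<lambda>z. z \<circ> par_ports n1 m1) ` sum_vecs A B
      \<subseteq> rel_par (of_ports n1 m1 ` A) (of_ports n2 m2 ` B)"
  proof
    fix p assume "p \<in> of_ports (n1 + n2) (m1 + m2) ` (\<lambda>z. z \<circ> par_ports n1 m1) ` sum_vecs A B"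
    then obtain z where "z \<in> sum_vecs A B" and p: "p = of_ports (n1 + n2) (m1 + m2) (z \<circ> par_ports n1 m1)"
      by blast
    from \<open>z \<in> sum_vecs A B\<close> obtain x y where "x \<in> A" "y \<in> B" and z: "z = case_sum x y"
      by (rule sum_vecsE)
    have "(fst (of_ports n1 m1 x), snd (of_ports n1 m1 x)) \<in> of_ports n1 m1 ` A"
      "(fst (of_ports n2 m2 y), snd (of_ports n2 m2 y)) \<in> of_ports n2 m2 ` B"
      using \<open>x \<in> A\<close> \<open>y \<in> B\<close> by simp_all
    then show "p \<in> rel_par (of_ports n1 m1 ` A) (of_ports n2 m2 ` B)"
      unfolding rel_par_def p z of_ports_par by blast
  qed
qed

lemma iota_rel_par_of_ports:
  "iota (n1 + n2) (m1 + m2) (rel_par (of_ports n1 m1 ` A) (of_ports n2 m2 ` B))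
     = rel_par (iota n1 m1 (of_ports n1 m1 ` A)) (iota n2 m2 (of_ports n2 m2 ` B))"
  by (simp add: rel_par_of_ports iota_of_ports ratfun_to_fls.ext_hull_reindex
      ratfun_to_fls.ext_hull_sum_vecs)

lemma iota_rel_seq_of_ports:
  assumes "affine_closed A" "affine_closed B"
  shows "iota n l (rel_seq (of_ports n m ` A) (of_ports m l ` B))
     = rel_seq (iota n m (of_ports n m ` A)) (iota m l (of_ports m l ` B))"
proof -
  let ?glue = "\<lambda>Z. Z \<inter> {z. \<forall>k<m. z (Inl (Inr k)) = z (Inr (Inl k))}"
  have "iota n l (rel_seq (of_ports n m ` A) (of_ports m l ` B))
      = of_ports n l ` ratfun_to_fls.ext_hull ((\<lambda>z. z \<circ> map_sum Inl Inr) ` ?glue (sum_vecs A B))"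
    by (simp add: rel_seq_of_ports iota_of_ports)
  also have "\<dots> = of_ports n l ` (\<lambda>z. z \<circ> map_sum Inl Inr) ` ratfun_to_fls.ext_hull (?glue (sum_vecs A B))"
    by (simp add: ratfun_to_fls.ext_hull_reindex)
  also have "\<dots> = of_ports n l ` (\<lambda>z. z \<circ> map_sum Inl Inr) `
      ?glue (sum_vecs (ratfun_to_fls.ext_hull A) (ratfun_to_fls.ext_hull B))"
    using ratfun_to_fls.ext_hull_Int_hyperplanes[OF affine_closed_sum_vecs[OF assms],
        where p = "\<lambda>k. Inl (Inr k)" and q = "\<lambda>k. Inr (Inl k)" and m = m]
    by (simp add: ratfun_to_fls.ext_hull_sum_vecs)
  also have "\<dots> = rel_seq (iota n m (of_ports n m ` A)) (iota m l (of_ports m l ` B))"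
    by (simp add: rel_seq_of_ports iota_of_ports)
  finally show ?thesis .
qed

lemma image_setcompr: "g ` {f t | t. True} = {g (f t) | t. True}"
  by auto

lemma image_setcompr2: "g ` {f t u | t u. True} = {g (f t u) | t u. True}"
  by auto

lemma den_translated_span:
  "den Copy = of_ports 1 2 ` translated_span (\<lambda>_. 0) (\<lambda>_ _. 1) 1"
  "den Disc = of_ports 1 0 ` translated_span (\<lambda>_. 0) (\<lambda>_ _. 1) 1"
  "den (Amp r) = of_ports 1 1 `
     translated_span (\<lambda>_. 0) (\<lambda>_. case_sum (\<lambda>_. 1) (\<lambda>_. Fraction_Field.Fract [:r:] 1)) 1"
  "den Reg = of_ports 1 1 `
     translated_span (\<lambda>_. 0) (\<lambda>_. case_sum (\<lambda>_. 1) (\<lambda>_. Fraction_Field.Fract [:0, 1:] 1)) 1"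
  "den Add = of_ports 2 1 `
     translated_span (\<lambda>_. 0) (\<lambda>k. case_sum (\<lambda>i. if i = k then 1 else 0) (\<lambda>_. 1)) 2"
  "den Zero = of_ports 0 1 ` translated_span (\<lambda>_. 0) (\<lambda>_ _. 0) 0"
  "den One = of_ports 0 1 ` translated_span (\<lambda>_. 1) (\<lambda>_ _. 0) 0"
  "den CopyOp = of_ports 2 1 ` translated_span (\<lambda>_. 0) (\<lambda>_ _. 1) 1"
  "den DiscOp = of_ports 0 1 ` translated_span (\<lambda>_. 0) (\<lambda>_ _. 1) 1"
  "den (AmpOp r) = of_ports 1 1 `
     translated_span (\<lambda>_. 0) (\<lambda>_. case_sum (\<lambda>_. Fraction_Field.Fract [:r:] 1) (\<lambda>_. 1)) 1"
  "den RegOp = of_ports 1 1 `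
     translated_span (\<lambda>_. 0) (\<lambda>_. case_sum (\<lambda>_. Fraction_Field.Fract [:0, 1:] 1) (\<lambda>_. 1)) 1"
  "den AddOp = of_ports 1 2 `
     translated_span (\<lambda>_. 0) (\<lambda>k. case_sum (\<lambda>_. 1) (\<lambda>i. if i = k then 1 else 0)) 2"
  "den ZeroOp = of_ports 1 0 ` translated_span (\<lambda>_. 0) (\<lambda>_ _. 0) 0"
  "den OneOp = of_ports 1 0 ` translated_span (\<lambda>_. 1) (\<lambda>_ _. 0) 0"
  "den Id0 = of_ports 0 0 ` translated_span (\<lambda>_. 0) (\<lambda>_ _. 0) 0"
  "den Id1 = of_ports 1 1 ` translated_span (\<lambda>_. 0) (\<lambda>_ _. 1) 1"
  "den Sw = of_ports 2 2 ` translated_span (\<lambda>_. 0)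
     (\<lambda>k. case_sum (\<lambda>i. if i = k then 1 else 0) (\<lambda>i. if i = 1 - k then 1 else 0)) 2"
  unfolding translated_span_0 translated_span_1 translated_span_2 image_setcompr image_setcompr2
  by (simp_all add: of_ports_def upt_rec numeral_2_eq_2 mult.commute)

lemma iota_generators:
  "iota 1 2 (den Copy) = {([\<alpha>], [\<alpha>, \<alpha>]) | \<alpha>. True}"
  "iota 1 0 (den Disc) = {([\<alpha>], []) | \<alpha>. True}"
  "iota 1 1 (den (Amp r)) = {([\<alpha>], [fls_const r * \<alpha>]) | \<alpha>. True}"
  "iota 1 1 (den Reg) = {([\<alpha>], [\<alpha> * fls_X]) | \<alpha>. True}"
  "iota 2 1 (den Add) = {([\<alpha>, \<beta>], [\<alpha> + \<beta>]) | \<alpha> \<beta>. True}"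
  "iota 0 1 (den Zero) = {([], [0])}"
  "iota 0 1 (den One) = {([], [1])}"
  "iota 2 1 (den CopyOp) = {([\<alpha>, \<alpha>], [\<alpha>]) | \<alpha>. True}"
  "iota 0 1 (den DiscOp) = {([], [\<alpha>]) | \<alpha>. True}"
  "iota 1 1 (den (AmpOp r)) = {([fls_const r * \<alpha>], [\<alpha>]) | \<alpha>. True}"
  "iota 1 1 (den RegOp) = {([\<alpha> * fls_X], [\<alpha>]) | \<alpha>. True}"
  "iota 1 2 (den AddOp) = {([\<alpha> + \<beta>], [\<alpha>, \<beta>]) | \<alpha> \<beta>. True}"
  "iota 1 0 (den ZeroOp) = {([0], [])}"
  "iota 1 0 (den OneOp) = {([1], [])}"
  "iota 0 0 (den Id0) = {([], [])}"
  "iota 1 1 (den Id1) = {([\<alpha>], [\<alpha>]) | \<alpha>. True}"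
  "iota 2 2 (den Sw) = {([\<alpha>, \<beta>], [\<beta>, \<alpha>]) | \<alpha> \<beta>. True}"
  unfolding den_translated_span iota_of_ports ratfun_to_fls.ext_hull_translated_span
  unfolding translated_span_0 translated_span_1 translated_span_2 image_setcompr image_setcompr2
  by (simp_all add: of_ports_def upt_rec numeral_2_eq_2 ratfun_to_fls_const ratfun_to_fls_X mult.commute)

lemma sort_Seq_eq_Some:
  "sort (Seq c d) = Some (n, m) \<longleftrightarrow> (\<exists>k. sort c = Some (n, k) \<and> sort d = Some (k, m))"
  by (auto split: option.splits prod.splits if_splits)

lemma sort_Par_eq_Some:
  "sort (Par c d) = Some (n, m) \<longleftrightarrow>
     (\<exists>n1 m1 n2 m2. sort c = Some (n1, m1) \<and> sort d = Some (n2, m2) \<and> n = n1 + n2 \<and> m = m1 + m2)"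
  by (auto split: option.splits prod.splits if_splits)

definition affine_rel :: "nat \<Rightarrow> nat \<Rightarrow> ('a::field list \<times> 'a list) set \<Rightarrow> bool" where
  "affine_rel n m R \<longleftrightarrow> (\<exists>X. affine_closed X \<and> R = of_ports n m ` X)"

lemma affine_relE:
  assumes "affine_rel n m R"
  obtains X where "affine_closed X" "R = of_ports n m ` X"
  using assms unfolding affine_rel_def by blast

lemma affine_rel_translated_span: "affine_rel n m (of_ports n m ` translated_span b B P)"
  unfolding affine_rel_def using affine_closed_translated_span by blast

lemma affine_rel_rel_seq:
  assumes "affine_rel n k R" "affine_rel k m S"
  shows "affine_rel n m (rel_seq R S)"
proof -
  obtain X Y where X: "affine_closed X" "R = of_ports n k ` X" and Y: "affine_closed Y" "S = of_ports k m ` Y"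
    using assms by (elim affine_relE)
  let ?Z = "(\<lambda>z. z \<circ> map_sum Inl Inr) ` (sum_vecs X Y \<inter> {z. \<forall>i<k. z (Inl (Inr i)) = z (Inr (Inl i))})"
  have "affine_closed ?Z"
    using affine_closed_coords_eq[where p = "\<lambda>i. Inl (Inr i)" and q = "\<lambda>i. Inr (Inl i)" and m = k]
    by (intro affine_closed_reindex affine_closed_Int affine_closed_sum_vecs X(1) Y(1)) simp
  moreover have "rel_seq R S = of_ports n m ` ?Z" unfolding X(2) Y(2) by (rule rel_seq_of_ports)
  ultimately show ?thesis unfolding affine_rel_def by blast
qed

lemma affine_rel_rel_par:
  assumes "affine_rel n1 m1 R" "affine_rel n2 m2 S"
  shows "affine_rel (n1 + n2) (m1 + m2) (rel_par R S)"
proof -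
  obtain X Y where X: "affine_closed X" "R = of_ports n1 m1 ` X" and Y: "affine_closed Y" "S = of_ports n2 m2 ` Y"
    using assms by (elim affine_relE)
  let ?Z = "(\<lambda>z. z \<circ> par_ports n1 m1) ` sum_vecs X Y"
  have "affine_closed ?Z" by (intro affine_closed_reindex affine_closed_sum_vecs X(1) Y(1))
  moreover have "rel_par R S = of_ports (n1 + n2) (m1 + m2) ` ?Z" unfolding X(2) Y(2) by (rule rel_par_of_ports)
  ultimately show ?thesis unfolding affine_rel_def by blast
qed

lemma iota_rel_seq:
  assumes "affine_rel n k R" "affine_rel k m S"
  shows "iota n m (rel_seq R S) = rel_seq (iota n k R) (iota k m S)"
proof -
  obtain X Y where "affine_closed X" "R = of_ports n k ` X" "affine_closed Y" "S = of_ports k m ` Y"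
    using assms by (elim affine_relE)
  then show ?thesis by (simp add: iota_rel_seq_of_ports)
qed

lemma iota_rel_par:
  assumes "affine_rel n1 m1 R" "affine_rel n2 m2 S"
  shows "iota (n1 + n2) (m1 + m2) (rel_par R S) = rel_par (iota n1 m1 R) (iota n2 m2 S)"
proof -
  obtain X Y where "R = of_ports n1 m1 ` X" "S = of_ports n2 m2 ` Y"
    using assms by (elim affine_relE)
  then show ?thesis by (simp add: iota_rel_par_of_ports)
qed

lemma length_iota_affine_rel:
  assumes "affine_rel n m R" "x \<in> iota n m R"
  shows "length (fst x) = n" "length (snd x) = m"
proof -
  obtain X where "R = of_ports n m ` X" using assms(1) by (elim affine_relE)
  with assms(2) obtain g where "x = of_ports n m g" by (auto simp: iota_of_ports)
  then show "length (fst x) = n" "length (snd x) = m" by (simp_all add: of_ports_def)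
qed

lemma den_affine_rel: "sort c = Some (n, m) \<Longrightarrow> affine_rel n m (den c)"
proof (induction c arbitrary: n m)
  case (Seq c d)
  from Seq.prems obtain k where "sort c = Some (n, k)" "sort d = Some (k, m)"
    unfolding sort_Seq_eq_Some by blast
  with Seq.IH show ?case by (simp add: affine_rel_rel_seq)
next
  case (Par c d)
  from Par.prems obtain n1 m1 n2 m2 where "sort c = Some (n1, m1)" "sort d = Some (n2, m2)"
    and "n = n1 + n2" "m = m1 + m2" unfolding sort_Par_eq_Some by blast
  with Par.IH show ?case by (simp add: affine_rel_rel_par)
qed (auto simp del: den.simps simp: den_translated_span intro: affine_rel_translated_span)

section \<open>Operational semantics\<close>

lemma step_lengths:
  assumes "step c t s u v s'" "sort c = Some (n, m)"
  shows "length u = n \<and> length v = m \<and> length s = nregs c \<and> length s' = nregs c"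
  using assms
proof (induction arbitrary: n m rule: step.induct)
  case (s_Seq c t s1 u w s1' d s2 v s2')
  then obtain k where "sort c = Some (n, k)" "sort d = Some (k, m)"
    unfolding sort_Seq_eq_Some by blast
  with s_Seq.IH show ?case by fastforce
next
  case (s_Par c t s1 u1 v1 s1' d s2 u2 v2 s2')
  then obtain n1 m1 n2 m2 where "sort c = Some (n1, m1)" "sort d = Some (n2, m2)"
    "n = n1 + n2" "m = m1 + m2"
    unfolding sort_Par_eq_Some by blast
  with s_Par.IH show ?case by fastforce
qed auto

text \<open>Away from time 0 every circuit can idle with all values 0; at time 0 the generator
  \<^const>\<open>One\<close> has to emit 1.\<close>
lemma step_idle:
  assumes "sort c = Some (n, m)" "t \<noteq> 0"
  shows "step c t (replicate (nregs c) 0) (replicate n 0) (replicate m 0) (replicate (nregs c) 0)"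
  using assms
proof (induction c arbitrary: n m)
  case (Seq c d)
  then obtain k where "sort c = Some (n, k)" "sort d = Some (k, m)"
    unfolding sort_Seq_eq_Some by blast
  with Seq.IH Seq.prems(2) show ?case
    using s_Seq by (fastforce simp: replicate_add)
next
  case (Par c d)
  then obtain n1 m1 n2 m2 where "sort c = Some (n1, m1)" "sort d = Some (n2, m2)"
    "n = n1 + n2" "m = m1 + m2"
    unfolding sort_Par_eq_Some by blast
  with Par.IH Par.prems(2) show ?case
    using s_Par by (fastforce simp: replicate_add)
next
  case One
  then show ?case using s_One[of t] by auto
next
  case OneOp
  then show ?case using s_OneOp[of t] by auto
qed (auto simp: numeral_2_eq_2 intro: step.intros
      s_Add[where a = 0 and b = 0, simplified] s_AddOp[where a = 0 and b = 0, simplified]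
      s_Amp[where a = 0, simplified] s_AmpOp[where a = 0, simplified]
      s_Copy[where a = 0, simplified] s_CopyOp[where a = 0, simplified])

definition runs :: "'k::field circ \<Rightarrow> nat \<Rightarrow> nat \<Rightarrow> int \<Rightarrow> (int \<Rightarrow> 'k list \<times> 'k list) \<Rightarrow> bool" where
  "runs c n m t \<sigma> \<longleftrightarrow> (\<exists>S. S t = replicate (nregs c) 0 \<and>
     (\<forall>i\<ge>t. step c i (S i) (fst (\<sigma> i)) (snd (\<sigma> i)) (S (i + 1))) \<and> (\<forall>i<t. \<sigma> i = vzero n m))"

lemma op_sem_iff_runs: "\<sigma> \<in> op_sem n m c \<longleftrightarrow> (\<exists>t\<le>0. runs c n m t \<sigma>)"
proof
  assume "\<sigma> \<in> op_sem n m c"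
  then obtain t S U V where "t \<le> 0" "S t = replicate (nregs c) 0"
    "\<forall>i\<ge>t. step c i (S i) (U i) (V i) (S (i + 1))"
    and \<sigma>: "\<sigma> = (\<lambda>i. if i < t then vzero n m else (U i, V i))"
    unfolding op_sem_def by blast
  then show "\<exists>t\<le>0. runs c n m t \<sigma>" unfolding runs_def by (intro exI[of _ t] conjI exI[of _ S]) auto
next
  assume "\<exists>t\<le>0. runs c n m t \<sigma>"
  then obtain t S where "t \<le> 0" "S t = replicate (nregs c) 0"
    "\<forall>i\<ge>t. step c i (S i) (fst (\<sigma> i)) (snd (\<sigma> i)) (S (i + 1))" "\<forall>i<t. \<sigma> i = vzero n m"
    unfolding runs_def by blast
  moreover have "\<sigma> = (\<lambda>i. if i < t then vzero n m else (fst (\<sigma> i), snd (\<sigma> i)))"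
    using \<open>\<forall>i<t. \<sigma> i = vzero n m\<close> by auto
  ultimately show "\<sigma> \<in> op_sem n m c"
    unfolding op_sem_def
    by (intro CollectI exI[of _ t] conjI exI[of _ S] exI[of _ "\<lambda>i. fst (\<sigma> i)"]
        exI[of _ "\<lambda>i. snd (\<sigma> i)"]) simp_all
qed

text \<open>A computation may be started earlier: it idles until the original start time, which is
  at most 0, so the generator \<^const>\<open>One\<close> is not yet active.\<close>
lemma runs_earlier:
  assumes "sort c = Some (n, m)" "runs c n m t \<sigma>" "t' \<le> t" "t \<le> 0"
  shows "runs c n m t' \<sigma>"
proof -
  obtain S where S: "S t = replicate (nregs c) 0"
    "\<forall>i\<ge>t. step c i (S i) (fst (\<sigma> i)) (snd (\<sigma> i)) (S (i + 1))" "\<forall>i<t. \<sigma> i = vzero n m"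
    using assms(2) unfolding runs_def by blast
  define S' where "S' i = (if i < t then replicate (nregs c) 0 else S i)" for i
  have "step c i (S' i) (fst (\<sigma> i)) (snd (\<sigma> i)) (S' (i + 1))" if "t' \<le> i" for i
  proof (cases "i < t")
    case True
    moreover have "i + 1 = t \<or> i + 1 < t" using True by linarith
    ultimately have "S' i = replicate (nregs c) 0" "S' (i + 1) = replicate (nregs c) 0"
      using S(1) by (auto simp: S'_def)
    moreover have "\<sigma> i = vzero n m" "i \<noteq> 0" using S(3) True assms(4) by auto
    ultimately show ?thesis using step_idle[OF assms(1)] by (simp add: vzero_def)
  next
    case False
    then show ?thesis using S(2) by (simp add: S'_def)
  qed
  moreover have "S' t' = replicate (nregs c) 0" using S(1) assms(3) by (simp add: S'_def)
  moreover have "\<forall>i<t'. \<sigma> i = vzero n m" using S(3) assms(3) by simp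
  ultimately show ?thesis unfolding runs_def by blast
qed

inductive_cases step_SeqE: "step (Seq c d) t s u v s'"
inductive_cases step_ParE: "step (Par c d) t s u v s'"

definition traj_seq :: "(int \<Rightarrow> 'a list \<times> 'a list) set \<Rightarrow> (int \<Rightarrow> 'a list \<times> 'a list) set \<Rightarrow>
    (int \<Rightarrow> 'a list \<times> 'a list) set" where
  "traj_seq A B = {\<sigma>. \<exists>\<tau>1\<in>A. \<exists>\<tau>2\<in>B. (\<forall>i. snd (\<tau>1 i) = fst (\<tau>2 i)) \<and>
     \<sigma> = (\<lambda>i. (fst (\<tau>1 i), snd (\<tau>2 i)))}"

definition traj_par :: "(int \<Rightarrow> 'a list \<times> 'a list) set \<Rightarrow> (int \<Rightarrow> 'a list \<times> 'a list) set \<Rightarrow>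
    (int \<Rightarrow> 'a list \<times> 'a list) set" where
  "traj_par A B = {\<sigma>. \<exists>\<tau>1\<in>A. \<exists>\<tau>2\<in>B. \<sigma> = (\<lambda>i. (fst (\<tau>1 i) @ fst (\<tau>2 i), snd (\<tau>1 i) @ snd (\<tau>2 i)))}"

lemma traj_seqI:
  "\<tau>1 \<in> A \<Longrightarrow> \<tau>2 \<in> B \<Longrightarrow> \<forall>i. snd (\<tau>1 i) = fst (\<tau>2 i) \<Longrightarrow>
    (\<lambda>i. (fst (\<tau>1 i), snd (\<tau>2 i))) \<in> traj_seq A B"
  unfolding traj_seq_def by blast

lemma traj_seqE:
  assumes "\<sigma> \<in> traj_seq A B"
  obtains \<tau>1 \<tau>2 where "\<tau>1 \<in> A" "\<tau>2 \<in> B" "\<forall>i. snd (\<tau>1 i) = fst (\<tau>2 i)"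
    "\<sigma> = (\<lambda>i. (fst (\<tau>1 i), snd (\<tau>2 i)))"
  using assms unfolding traj_seq_def by blast

lemma traj_parI:
  "\<tau>1 \<in> A \<Longrightarrow> \<tau>2 \<in> B \<Longrightarrow>
    (\<lambda>i. (fst (\<tau>1 i) @ fst (\<tau>2 i), snd (\<tau>1 i) @ snd (\<tau>2 i))) \<in> traj_par A B"
  unfolding traj_par_def by blast

lemma traj_parE:
  assumes "\<sigma> \<in> traj_par A B"
  obtains \<tau>1 \<tau>2 where "\<tau>1 \<in> A" "\<tau>2 \<in> B"
    "\<sigma> = (\<lambda>i. (fst (\<tau>1 i) @ fst (\<tau>2 i), snd (\<tau>1 i) @ snd (\<tau>2 i)))"
  using assms unfolding traj_par_def by blast

lemma step_SeqD:
  assumes "step (Seq c d) i s u v s'" "sort c = Some (n, k)"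
  shows "\<exists>w. step c i (take (nregs c) s) u w (take (nregs c) s') \<and>
    step d i (drop (nregs c) s) w v (drop (nregs c) s')"
proof -
  obtain s1 w s1' s2 s2' where "s = s1 @ s2" "s' = s1' @ s2'"
    and c: "step c i s1 u w s1'" and d: "step d i s2 w v s2'"
    using assms(1) by (elim step_SeqE) blast
  moreover have "length s1 = nregs c" "length s1' = nregs c"
    using step_lengths[OF c assms(2)] by simp_all
  ultimately show ?thesis by auto
qed

lemma step_ParD:
  assumes "step (Par c d) i s u v s'" "sort c = Some (n1, m1)"
  shows "step c i (take (nregs c) s) (take n1 u) (take m1 v) (take (nregs c) s') \<and>
    step d i (drop (nregs c) s) (drop n1 u) (drop m1 v) (drop (nregs c) s')"
proof -
  obtain s1 u1 v1 s1' s2 u2 v2 s2' where "s = s1 @ s2" "s' = s1' @ s2'" "u = u1 @ u2" "v = v1 @ v2"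
    and c: "step c i s1 u1 v1 s1'" and d: "step d i s2 u2 v2 s2'"
    using assms(1) by (elim step_ParE) blast
  moreover have "length s1 = nregs c" "length s1' = nregs c" "length u1 = n1" "length v1 = m1"
    using step_lengths[OF c assms(2)] by simp_all
  ultimately show ?thesis by simp
qed

text \<open>The labels on the internal wires are chosen step by step, with zeros before the start.\<close>
lemma runs_SeqD:
  assumes "sort c = Some (n, k)" "runs (Seq c d) n l t \<sigma>"
  obtains \<tau>1 \<tau>2 where "runs c n k t \<tau>1" "runs d k l t \<tau>2" "\<forall>i. snd (\<tau>1 i) = fst (\<tau>2 i)"
    "\<sigma> = (\<lambda>i. (fst (\<tau>1 i), snd (\<tau>2 i)))"
proof -
  obtain S where S0: "S t = replicate (nregs c + nregs d) 0"
    and S: "\<forall>i\<ge>t. step (Seq c d) i (S i) (fst (\<sigma> i)) (snd (\<sigma> i)) (S (i + 1))"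
    and before: "\<forall>i<t. \<sigma> i = vzero n l"
    using assms(2) unfolding runs_def by auto
  let ?step = "\<lambda>i w. step c i (take (nregs c) (S i)) (fst (\<sigma> i)) w (take (nregs c) (S (i + 1))) \<and>
    step d i (drop (nregs c) (S i)) w (snd (\<sigma> i)) (drop (nregs c) (S (i + 1)))"
  define W where "W i = (if i < t then replicate k 0 else (SOME w. ?step i w))" for i
  have W_before: "W i = replicate k 0" if "i < t" for i
    using that by (simp add: W_def)
  have W_after: "?step i (W i)" if "t \<le> i" for i
  proof -
    have "\<exists>w. ?step i w" using step_SeqD[OF S[rule_format, OF that] assms(1)] .
    then have "?step i (SOME w. ?step i w)" by (rule someI_ex)
    then show ?thesis using that by (simp add: W_def)
  qed
  have "runs c n k t (\<lambda>i. (fst (\<sigma> i), W i))"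
    unfolding runs_def using S0 W_after before W_before
    by (intro exI[of _ "\<lambda>i. take (nregs c) (S i)"]) (simp add: vzero_def)
  moreover have "runs d k l t (\<lambda>i. (W i, snd (\<sigma> i)))"
    unfolding runs_def using S0 W_after before W_before
    by (intro exI[of _ "\<lambda>i. drop (nregs c) (S i)"]) (simp add: vzero_def)
  ultimately show thesis by (rule that) simp_all
qed

lemma runs_SeqI:
  assumes "runs c n k t \<tau>1" "runs d k l t \<tau>2" "\<forall>i. snd (\<tau>1 i) = fst (\<tau>2 i)"
  shows "runs (Seq c d) n l t (\<lambda>i. (fst (\<tau>1 i), snd (\<tau>2 i)))"
proof -
  obtain S1 S2 where
    S1: "S1 t = replicate (nregs c) 0" "\<forall>i\<ge>t. step c i (S1 i) (fst (\<tau>1 i)) (snd (\<tau>1 i)) (S1 (i + 1))"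
      "\<forall>i<t. \<tau>1 i = vzero n k"
    and S2: "S2 t = replicate (nregs d) 0" "\<forall>i\<ge>t. step d i (S2 i) (fst (\<tau>2 i)) (snd (\<tau>2 i)) (S2 (i + 1))"
      "\<forall>i<t. \<tau>2 i = vzero k l"
    using assms(1,2) unfolding runs_def by blast
  show ?thesis
    unfolding runs_def
  proof (intro exI[of _ "\<lambda>i. S1 i @ S2 i"] conjI allI impI)
    fix i assume "t \<le> i"
    then show "step (Seq c d) i (S1 i @ S2 i) (fst (fst (\<tau>1 i), snd (\<tau>2 i))) (snd (fst (\<tau>1 i), snd (\<tau>2 i)))
        (S1 (i + 1) @ S2 (i + 1))"
      using S1(2) S2(2) assms(3) by (auto intro!: s_Seq)
  qed (use S1 S2 in \<open>simp_all add: vzero_def replicate_add\<close>)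
qed

lemma runs_ParD:
  assumes "sort c = Some (n1, m1)" "runs (Par c d) (n1 + n2) (m1 + m2) t \<sigma>"
  shows "runs c n1 m1 t (\<lambda>i. (take n1 (fst (\<sigma> i)), take m1 (snd (\<sigma> i))))"
    and "runs d n2 m2 t (\<lambda>i. (drop n1 (fst (\<sigma> i)), drop m1 (snd (\<sigma> i))))"
proof -
  obtain S where S0: "S t = replicate (nregs c + nregs d) 0"
    and S: "\<forall>i\<ge>t. step (Par c d) i (S i) (fst (\<sigma> i)) (snd (\<sigma> i)) (S (i + 1))"
    and before: "\<forall>i<t. \<sigma> i = vzero (n1 + n2) (m1 + m2)"
    using assms(2) unfolding runs_def by auto
  note split = step_ParD[OF S[rule_format] assms(1)]
  show "runs c n1 m1 t (\<lambda>i. (take n1 (fst (\<sigma> i)), take m1 (snd (\<sigma> i))))"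
    unfolding runs_def using S0 split before
    by (intro exI[of _ "\<lambda>i. take (nregs c) (S i)"]) (simp add: vzero_def replicate_add)
  show "runs d n2 m2 t (\<lambda>i. (drop n1 (fst (\<sigma> i)), drop m1 (snd (\<sigma> i))))"
    unfolding runs_def using S0 split before
    by (intro exI[of _ "\<lambda>i. drop (nregs c) (S i)"]) (simp add: vzero_def replicate_add)
qed

lemma runs_ParI:
  assumes "runs c n1 m1 t \<tau>1" "runs d n2 m2 t \<tau>2"
  shows "runs (Par c d) (n1 + n2) (m1 + m2) t
    (\<lambda>i. (fst (\<tau>1 i) @ fst (\<tau>2 i), snd (\<tau>1 i) @ snd (\<tau>2 i)))"
proof -
  obtain S1 S2 where
    S1: "S1 t = replicate (nregs c) 0" "\<forall>i\<ge>t. step c i (S1 i) (fst (\<tau>1 i)) (snd (\<tau>1 i)) (S1 (i + 1))"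
      "\<forall>i<t. \<tau>1 i = vzero n1 m1"
    and S2: "S2 t = replicate (nregs d) 0" "\<forall>i\<ge>t. step d i (S2 i) (fst (\<tau>2 i)) (snd (\<tau>2 i)) (S2 (i + 1))"
      "\<forall>i<t. \<tau>2 i = vzero n2 m2"
    using assms unfolding runs_def by blast
  show ?thesis
    unfolding runs_def
    by (intro exI[of _ "\<lambda>i. S1 i @ S2 i"] conjI allI impI)
      (use S1 S2 in \<open>simp_all add: s_Par vzero_def replicate_add\<close>)
qed

lemma op_sem_Seq:
  assumes "sort c = Some (n, k)" "sort d = Some (k, l)"
  shows "op_sem n l (Seq c d) = traj_seq (op_sem n k c) (op_sem k l d)"
proof
  show "op_sem n l (Seq c d) \<subseteq> traj_seq (op_sem n k c) (op_sem k l d)"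
  proof
    fix \<sigma> assume "\<sigma> \<in> op_sem n l (Seq c d)"
    then obtain t where "t \<le> 0" and run: "runs (Seq c d) n l t \<sigma>" unfolding op_sem_iff_runs by blast
    from assms(1) run obtain \<tau>1 \<tau>2 where "runs c n k t \<tau>1" "runs d k l t \<tau>2"
      and mid: "\<forall>i. snd (\<tau>1 i) = fst (\<tau>2 i)" and \<sigma>: "\<sigma> = (\<lambda>i. (fst (\<tau>1 i), snd (\<tau>2 i)))"
      by (rule runs_SeqD)
    then have "\<tau>1 \<in> op_sem n k c" "\<tau>2 \<in> op_sem k l d"
      using \<open>t \<le> 0\<close> unfolding op_sem_iff_runs by blast+
    then show "\<sigma> \<in> traj_seq (op_sem n k c) (op_sem k l d)"
      unfolding \<sigma> using mid by (rule traj_seqI)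
  qed
  show "traj_seq (op_sem n k c) (op_sem k l d) \<subseteq> op_sem n l (Seq c d)"
  proof
    fix \<sigma> assume "\<sigma> \<in> traj_seq (op_sem n k c) (op_sem k l d)"
    then obtain \<tau>1 \<tau>2 where "\<tau>1 \<in> op_sem n k c" "\<tau>2 \<in> op_sem k l d"
      and mid: "\<forall>i. snd (\<tau>1 i) = fst (\<tau>2 i)" and \<sigma>: "\<sigma> = (\<lambda>i. (fst (\<tau>1 i), snd (\<tau>2 i)))"
      by (rule traj_seqE)
    then obtain t1 t2 where "t1 \<le> 0" "runs c n k t1 \<tau>1" "t2 \<le> 0" "runs d k l t2 \<tau>2"
      unfolding op_sem_iff_runs by blast
    then have "runs c n k (min t1 t2) \<tau>1" "runs d k l (min t1 t2) \<tau>2"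
      using runs_earlier[OF assms(1), of t1 \<tau>1 "min t1 t2"] runs_earlier[OF assms(2), of t2 \<tau>2 "min t1 t2"]
      by simp_all
    then have "runs (Seq c d) n l (min t1 t2) \<sigma>"
      unfolding \<sigma> using mid by (rule runs_SeqI)
    moreover have "min t1 t2 \<le> 0" using \<open>t1 \<le> 0\<close> by simp
    ultimately show "\<sigma> \<in> op_sem n l (Seq c d)" unfolding op_sem_iff_runs by blast
  qed
qed

lemma op_sem_Par:
  assumes "sort c = Some (n1, m1)" "sort d = Some (n2, m2)"
  shows "op_sem (n1 + n2) (m1 + m2) (Par c d) = traj_par (op_sem n1 m1 c) (op_sem n2 m2 d)"
proof
  show "op_sem (n1 + n2) (m1 + m2) (Par c d) \<subseteq> traj_par (op_sem n1 m1 c) (op_sem n2 m2 d)"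
  proof
    fix \<sigma> assume "\<sigma> \<in> op_sem (n1 + n2) (m1 + m2) (Par c d)"
    then obtain t where "t \<le> 0" and run: "runs (Par c d) (n1 + n2) (m1 + m2) t \<sigma>"
      unfolding op_sem_iff_runs by blast
    have "(\<lambda>i. (take n1 (fst (\<sigma> i)), take m1 (snd (\<sigma> i)))) \<in> op_sem n1 m1 c"
      "(\<lambda>i. (drop n1 (fst (\<sigma> i)), drop m1 (snd (\<sigma> i)))) \<in> op_sem n2 m2 d"
      using runs_ParD[OF assms(1) run] \<open>t \<le> 0\<close> unfolding op_sem_iff_runs by blast+
    then show "\<sigma> \<in> traj_par (op_sem n1 m1 c) (op_sem n2 m2 d)"
      using traj_parI by fastforce
  qed
  show "traj_par (op_sem n1 m1 c) (op_sem n2 m2 d) \<subseteq> op_sem (n1 + n2) (m1 + m2) (Par c d)"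
  proof
    fix \<sigma> assume "\<sigma> \<in> traj_par (op_sem n1 m1 c) (op_sem n2 m2 d)"
    then obtain \<tau>1 \<tau>2 where "\<tau>1 \<in> op_sem n1 m1 c" "\<tau>2 \<in> op_sem n2 m2 d"
      and \<sigma>: "\<sigma> = (\<lambda>i. (fst (\<tau>1 i) @ fst (\<tau>2 i), snd (\<tau>1 i) @ snd (\<tau>2 i)))"
      by (rule traj_parE)
    then obtain t1 t2 where "t1 \<le> 0" "runs c n1 m1 t1 \<tau>1" "t2 \<le> 0" "runs d n2 m2 t2 \<tau>2"
      unfolding op_sem_iff_runs by blast
    then have "runs c n1 m1 (min t1 t2) \<tau>1" "runs d n2 m2 (min t1 t2) \<tau>2"
      using runs_earlier[OF assms(1), of t1 \<tau>1 "min t1 t2"] runs_earlier[OF assms(2), of t2 \<tau>2 "min t1 t2"]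
      by simp_all
    then have "runs (Par c d) (n1 + n2) (m1 + m2) (min t1 t2) \<sigma>"
      unfolding \<sigma> by (rule runs_ParI)
    moreover have "min t1 t2 \<le> 0" using \<open>t1 \<le> 0\<close> by simp
    ultimately show "\<sigma> \<in> op_sem (n1 + n2) (m1 + m2) (Par c d)" unfolding op_sem_iff_runs by blast
  qed
qed

section \<open>Trajectories as coefficient sequences\<close>

lemma fls_list_eqI:
  assumes "length xs = length ys" "\<And>i. map (\<lambda>\<alpha>. fls_nth \<alpha> i) xs = map (\<lambda>\<alpha>. fls_nth \<alpha> i) ys"
  shows "xs = ys"
proof (rule nth_equalityI)
  show "length xs = length ys" by fact
  fix j assume j: "j < length xs"
  show "xs ! j = ys ! j"
  proof (rule fls_eqI)
    fix i
    have "map (\<lambda>\<alpha>. fls_nth \<alpha> i) xs ! j = map (\<lambda>\<alpha>. fls_nth \<alpha> i) ys ! j" using assms(2) by simp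
    then show "fls_nth (xs ! j) i = fls_nth (ys ! j) i" using j assms(1) by simp
  qed
qed

lemma kappa_rel_seq:
  assumes "\<forall>x\<in>P. length (snd x) = k" "\<forall>x\<in>Q. length (fst x) = k"
  shows "kappa ` rel_seq P Q = traj_seq (kappa ` P) (kappa ` Q)"
proof
  show "kappa ` rel_seq P Q \<subseteq> traj_seq (kappa ` P) (kappa ` Q)"
  proof
    fix \<sigma> assume "\<sigma> \<in> kappa ` rel_seq P Q"
    then obtain p where "p \<in> rel_seq P Q" and \<sigma>: "\<sigma> = kappa p" by (rule imageE)
    from \<open>p \<in> rel_seq P Q\<close> obtain u w v where p: "p = (u, w)" and "(u, v) \<in> P" "(v, w) \<in> Q"
      by (rule rel_seqE)
    then have "(\<lambda>i. (fst (kappa (u, v) i), snd (kappa (v, w) i))) \<in> traj_seq (kappa ` P) (kappa ` Q)"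
      by (intro traj_seqI imageI) (simp_all add: kappa_def)
    then show "\<sigma> \<in> traj_seq (kappa ` P) (kappa ` Q)" by (simp add: \<sigma> p kappa_def)
  qed
  show "traj_seq (kappa ` P) (kappa ` Q) \<subseteq> kappa ` rel_seq P Q"
  proof
    fix \<sigma> assume "\<sigma> \<in> traj_seq (kappa ` P) (kappa ` Q)"
    then obtain \<tau>1 \<tau>2 where "\<tau>1 \<in> kappa ` P" "\<tau>2 \<in> kappa ` Q"
      and mid: "\<forall>i. snd (\<tau>1 i) = fst (\<tau>2 i)" and \<sigma>: "\<sigma> = (\<lambda>i. (fst (\<tau>1 i), snd (\<tau>2 i)))"
      by (rule traj_seqE)
    then obtain x y where "x \<in> P" "y \<in> Q" "\<tau>1 = kappa x" "\<tau>2 = kappa y" by blast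
    have "snd x = fst y"
    proof (rule fls_list_eqI)
      show "length (snd x) = length (fst y)" using assms \<open>x \<in> P\<close> \<open>y \<in> Q\<close> by simp
      show "map (\<lambda>\<alpha>. fls_nth \<alpha> i) (snd x) = map (\<lambda>\<alpha>. fls_nth \<alpha> i) (fst y)" for i
        using mid by (simp add: \<open>\<tau>1 = kappa x\<close> \<open>\<tau>2 = kappa y\<close> kappa_def)
    qed
    have "(fst x, snd x) \<in> P" using \<open>x \<in> P\<close> by simp
    moreover have "(snd x, snd y) \<in> Q" using \<open>y \<in> Q\<close> \<open>snd x = fst y\<close> by simp
    ultimately have "(fst x, snd y) \<in> rel_seq P Q" by (rule rel_seqI)
    moreover have "\<sigma> = kappa (fst x, snd y)"
      by (simp add: \<sigma> \<open>\<tau>1 = kappa x\<close> \<open>\<tau>2 = kappa y\<close> kappa_def)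
    ultimately show "\<sigma> \<in> kappa ` rel_seq P Q" by (rule rev_image_eqI)
  qed
qed

lemma kappa_rel_par: "kappa ` rel_par P Q = traj_par (kappa ` P) (kappa ` Q)"
proof
  show "kappa ` rel_par P Q \<subseteq> traj_par (kappa ` P) (kappa ` Q)"
  proof
    fix \<sigma> assume "\<sigma> \<in> kappa ` rel_par P Q"
    then obtain p where "p \<in> rel_par P Q" and \<sigma>: "\<sigma> = kappa p" by (rule imageE)
    from \<open>p \<in> rel_par P Q\<close> obtain u1 u2 v1 v2
      where p: "p = (u1 @ u2, v1 @ v2)" and "(u1, v1) \<in> P" "(u2, v2) \<in> Q"
      by (rule rel_parE)
    then have "(\<lambda>i. (fst (kappa (u1, v1) i) @ fst (kappa (u2, v2) i),
        snd (kappa (u1, v1) i) @ snd (kappa (u2, v2) i))) \<in> traj_par (kappa ` P) (kappa ` Q)"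
      by (intro traj_parI imageI)
    then show "\<sigma> \<in> traj_par (kappa ` P) (kappa ` Q)" by (simp add: \<sigma> p kappa_def)
  qed
  show "traj_par (kappa ` P) (kappa ` Q) \<subseteq> kappa ` rel_par P Q"
  proof
    fix \<sigma> assume "\<sigma> \<in> traj_par (kappa ` P) (kappa ` Q)"
    then obtain \<tau>1 \<tau>2 where "\<tau>1 \<in> kappa ` P" "\<tau>2 \<in> kappa ` Q"
      and \<sigma>: "\<sigma> = (\<lambda>i. (fst (\<tau>1 i) @ fst (\<tau>2 i), snd (\<tau>1 i) @ snd (\<tau>2 i)))"
      by (rule traj_parE)
    then obtain x y where "x \<in> P" "y \<in> Q" "\<tau>1 = kappa x" "\<tau>2 = kappa y" by blast
    then have "(fst x @ fst y, snd x @ snd y) \<in> rel_par P Q"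
      by (intro rel_parI) simp_all
    moreover have "\<sigma> = kappa (fst x @ fst y, snd x @ snd y)"
      by (simp add: \<sigma> \<open>\<tau>1 = kappa x\<close> \<open>\<tau>2 = kappa y\<close> kappa_def)
    ultimately show "\<sigma> \<in> kappa ` rel_par P Q" by (rule rev_image_eqI)
  qed
qed

lemma kappa_iota_den_Seq:
  assumes "sort c = Some (n, k)" "sort d = Some (k, m)"
  shows "kappa ` iota n m (den (Seq c d)) = traj_seq (kappa ` iota n k (den c)) (kappa ` iota k m (den d))"
proof -
  have "affine_rel n k (den c)" "affine_rel k m (den d)"
    using assms by (simp_all add: den_affine_rel)
  then show ?thesis
    by (simp add: iota_rel_seq kappa_rel_seq[where k = k] length_iota_affine_rel)
qed

lemma kappa_iota_den_Par:
  assumes "sort c = Some (n1, m1)" "sort d = Some (n2, m2)"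
  shows "kappa ` iota (n1 + n2) (m1 + m2) (den (Par c d))
     = traj_par (kappa ` iota n1 m1 (den c)) (kappa ` iota n2 m2 (den d))"
  using assms by (simp add: den_affine_rel iota_rel_par kappa_rel_par)

lemma kappa_eventually_zero:
  obtains t where "t \<le> 0" "\<forall>i<t. kappa x i = vzero (length (fst x)) (length (snd x))"
proof -
  have "\<exists>t\<le>0. \<forall>\<alpha>\<in>set xs. \<forall>i<t. fls_nth \<alpha> i = 0" for xs :: "'a fls list"
  proof (induction xs)
    case (Cons \<alpha> xs)
    then obtain t where "t \<le> 0" "\<forall>\<beta>\<in>set xs. \<forall>i<t. fls_nth \<beta> i = 0" by blast
    then show ?case by (intro exI[of _ "min t (fls_subdegree \<alpha>)"]) auto
  qed auto
  then obtain t where "t \<le> 0" "\<forall>\<alpha>\<in>set (fst x @ snd x). \<forall>i<t. fls_nth \<alpha> i = 0" by blast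
  then show thesis
    by (intro that[of t]) (auto simp: kappa_def vzero_def intro!: nth_equalityI)
qed

lemma trajectory_eq_kappa:
  assumes "\<And>i. length (fst (\<sigma> i)) = n" "\<And>i. length (snd (\<sigma> i)) = m"
    and "\<forall>i<t. \<sigma> i = vzero n m"
  obtains x where "length (fst x) = n" "length (snd x) = m" "kappa x = \<sigma>"
proof -
  define x where "x = (map (\<lambda>j. Abs_fls (\<lambda>i. fst (\<sigma> i) ! j)) [0..<n],
    map (\<lambda>j. Abs_fls (\<lambda>i. snd (\<sigma> i) ! j)) [0..<m])"
  have "fls_nth (Abs_fls (\<lambda>i. fst (\<sigma> i) ! j)) i = fst (\<sigma> i) ! j" if "j < n" for i j
    using assms(3) that by (intro nth_Abs_fls_ex_lower_bound exI[of _ t]) (simp add: vzero_def)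
  moreover have "fls_nth (Abs_fls (\<lambda>i. snd (\<sigma> i) ! j)) i = snd (\<sigma> i) ! j" if "j < m" for i j
    using assms(3) that by (intro nth_Abs_fls_ex_lower_bound exI[of _ t]) (simp add: vzero_def)
  ultimately have "kappa x i = \<sigma> i" for i
    using assms(1,2)[of i] by (auto simp: kappa_def x_def prod_eq_iff intro!: nth_equalityI)
  then have "kappa x = \<sigma>" ..
  moreover have "length (fst x) = n" "length (snd x) = m" by (simp_all add: x_def)
  ultimately show thesis using that by blast
qed

lemma op_sem_stateless:
  assumes "nregs c = 0" "sort c = Some (n, m)"
    and E: "\<And>u v. (u, v) \<in> E \<longleftrightarrow> length u = n \<and> length v = m \<and>
      (\<forall>i. step c i [] (map (\<lambda>\<alpha>. fls_nth \<alpha> i) u) (map (\<lambda>\<alpha>. fls_nth \<alpha> i) v) [])"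
  shows "op_sem n m c = kappa ` E"
proof
  show "op_sem n m c \<subseteq> kappa ` E"
  proof
    fix \<sigma> assume "\<sigma> \<in> op_sem n m c"
    then obtain t where "t \<le> 0" "runs c n m t \<sigma>" unfolding op_sem_iff_runs by blast
    then obtain S where S: "\<forall>i\<ge>t. step c i (S i) (fst (\<sigma> i)) (snd (\<sigma> i)) (S (i + 1))"
      and before: "\<forall>i<t. \<sigma> i = vzero n m"
      unfolding runs_def by blast
    have st: "step c i [] (fst (\<sigma> i)) (snd (\<sigma> i)) []" for i
    proof (cases "i < t")
      case True
      then show ?thesis
        using step_idle[OF assms(2), of i] before \<open>t \<le> 0\<close> assms(1) by (simp add: vzero_def)
    next
      case False
      then have "step c i (S i) (fst (\<sigma> i)) (snd (\<sigma> i)) (S (i + 1))" using S by simp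
      moreover have "S i = []" "S (i + 1) = []"
        using step_lengths[OF calculation assms(2)] assms(1) by simp_all
      ultimately show ?thesis by simp
    qed
    have "length (fst (\<sigma> i)) = n" "length (snd (\<sigma> i)) = m" for i
      using step_lengths[OF st assms(2)] by simp_all
    then obtain x where "length (fst x) = n" "length (snd x) = m" and "kappa x = \<sigma>"
      using before by (rule trajectory_eq_kappa)
    note \<sigma> = \<open>kappa x = \<sigma>\<close>[symmetric]
    have "(fst x, snd x) \<in> E"
      unfolding E using st \<open>length (fst x) = n\<close> \<open>length (snd x) = m\<close> by (simp add: \<sigma> kappa_def)
    then show "\<sigma> \<in> kappa ` E" by (simp add: \<sigma>)
  qed
  show "kappa ` E \<subseteq> op_sem n m c"
  proof
    fix \<sigma> assume "\<sigma> \<in> kappa ` E"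
    then obtain u v where "(u, v) \<in> E" and \<sigma>: "\<sigma> = kappa (u, v)" by auto
    obtain t where "t \<le> 0" and before: "\<forall>i<t. kappa (u, v) i = vzero (length u) (length v)"
      using kappa_eventually_zero[of "(u, v)"] by auto
    have "runs c n m t \<sigma>"
      unfolding runs_def using \<open>(u, v) \<in> E\<close> before assms(1)
      by (intro exI[of _ "\<lambda>_. []"]) (simp add: E \<sigma> kappa_def)
    with \<open>t \<le> 0\<close> show "\<sigma> \<in> op_sem n m c" unfolding op_sem_iff_runs by blast
  qed
qed

inductive_simps step_generator_simps:
  "step Copy t s u v s'" "step Disc t s u v s'" "step (Amp r) t s u v s'" "step Reg t s u v s'"
  "step Add t s u v s'" "step Zero t s u v s'" "step One t s u v s'" "step CopyOp t s u v s'"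
  "step DiscOp t s u v s'" "step (AmpOp r) t s u v s'" "step RegOp t s u v s'"
  "step AddOp t s u v s'" "step ZeroOp t s u v s'" "step OneOp t s u v s'" "step Id0 t s u v s'"
  "step Id1 t s u v s'" "step Sw t s u v s'"

lemma all_fls_nth_eq_iff:
  fixes a b c :: "'a::field fls"
  shows "(\<forall>i. fls_nth a i = fls_nth b i) \<longleftrightarrow> a = b"
    and "(\<forall>i. fls_nth c i = fls_nth a i + fls_nth b i) \<longleftrightarrow> c = a + b"
    and "(\<forall>i. fls_nth b i = r * fls_nth a i) \<longleftrightarrow> b = fls_const r * a"
    and "(\<forall>i. fls_nth a i = 0) \<longleftrightarrow> a = 0"
  by (auto simp: fls_eq_iff)

lemma op_sem_Copy: "op_sem 1 2 Copy = kappa ` {([\<alpha>], [\<alpha>, \<alpha>]) | \<alpha>. True}"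
  by (rule op_sem_stateless) (auto simp: step_generator_simps all_fls_nth_eq_iff all_conj_distrib length_Suc_conv numeral_2_eq_2)

lemma op_sem_Disc: "op_sem 1 0 Disc = kappa ` {([\<alpha>], []) | \<alpha>. True}"
  by (rule op_sem_stateless) (auto simp: step_generator_simps all_fls_nth_eq_iff all_conj_distrib length_Suc_conv numeral_2_eq_2)

lemma op_sem_Amp: "op_sem 1 1 (Amp r) = kappa ` {([\<alpha>], [fls_const r * \<alpha>]) | \<alpha>. True}"
  by (rule op_sem_stateless) (auto simp: step_generator_simps all_fls_nth_eq_iff all_conj_distrib length_Suc_conv numeral_2_eq_2)

lemma op_sem_Add: "op_sem 2 1 Add = kappa ` {([\<alpha>, \<beta>], [\<alpha> + \<beta>]) | \<alpha> \<beta>. True}"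
  by (rule op_sem_stateless) (auto simp: step_generator_simps all_fls_nth_eq_iff all_conj_distrib length_Suc_conv numeral_2_eq_2)

lemma op_sem_Zero: "op_sem 0 1 Zero = kappa ` {([], [0])}"
  by (rule op_sem_stateless) (auto simp: step_generator_simps all_fls_nth_eq_iff all_conj_distrib length_Suc_conv numeral_2_eq_2)

lemma op_sem_One: "op_sem 0 1 One = kappa ` {([], [1])}"
  by (rule op_sem_stateless) (auto simp: step_generator_simps fls_eq_iff length_Suc_conv)

lemma op_sem_CopyOp: "op_sem 2 1 CopyOp = kappa ` {([\<alpha>, \<alpha>], [\<alpha>]) | \<alpha>. True}"
  by (rule op_sem_stateless) (auto simp: step_generator_simps all_fls_nth_eq_iff all_conj_distrib length_Suc_conv numeral_2_eq_2)

lemma op_sem_DiscOp: "op_sem 0 1 DiscOp = kappa ` {([], [\<alpha>]) | \<alpha>. True}"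
  by (rule op_sem_stateless) (auto simp: step_generator_simps all_fls_nth_eq_iff all_conj_distrib length_Suc_conv numeral_2_eq_2)

lemma op_sem_AmpOp: "op_sem 1 1 (AmpOp r) = kappa ` {([fls_const r * \<alpha>], [\<alpha>]) | \<alpha>. True}"
  by (rule op_sem_stateless) (auto simp: step_generator_simps all_fls_nth_eq_iff all_conj_distrib length_Suc_conv numeral_2_eq_2)

lemma op_sem_AddOp: "op_sem 1 2 AddOp = kappa ` {([\<alpha> + \<beta>], [\<alpha>, \<beta>]) | \<alpha> \<beta>. True}"
  by (rule op_sem_stateless) (auto simp: step_generator_simps all_fls_nth_eq_iff all_conj_distrib length_Suc_conv numeral_2_eq_2)

lemma op_sem_ZeroOp: "op_sem 1 0 ZeroOp = kappa ` {([0], [])}"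
  by (rule op_sem_stateless) (auto simp: step_generator_simps all_fls_nth_eq_iff all_conj_distrib length_Suc_conv numeral_2_eq_2)

lemma op_sem_OneOp: "op_sem 1 0 OneOp = kappa ` {([1], [])}"
  by (rule op_sem_stateless) (auto simp: step_generator_simps fls_eq_iff length_Suc_conv)

lemma op_sem_Id0: "op_sem 0 0 Id0 = kappa ` {([], [])}"
  by (rule op_sem_stateless) (auto simp: step_generator_simps all_fls_nth_eq_iff all_conj_distrib length_Suc_conv numeral_2_eq_2)

lemma op_sem_Id1: "op_sem 1 1 Id1 = kappa ` {([\<alpha>], [\<alpha>]) | \<alpha>. True}"
  by (rule op_sem_stateless) (auto simp: step_generator_simps all_fls_nth_eq_iff all_conj_distrib length_Suc_conv numeral_2_eq_2)

lemma op_sem_Sw: "op_sem 2 2 Sw = kappa ` {([\<alpha>, \<beta>], [\<beta>, \<alpha>]) | \<alpha> \<beta>. True}"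
  by (rule op_sem_stateless) (auto simp: step_generator_simps all_fls_nth_eq_iff all_conj_distrib length_Suc_conv numeral_2_eq_2)

lemma fls_nth_times_X: "fls_nth ((\<alpha> :: 'a::field fls) * fls_X) i = fls_nth \<alpha> (i - 1)"
  by (simp add: fls_X_times_conv_shift)

lemma runs_RegD:
  assumes "runs Reg 1 1 t \<sigma>"
  shows "length (fst (\<sigma> i)) = 1" "length (snd (\<sigma> i)) = 1" "snd (\<sigma> i) = fst (\<sigma> (i - 1))"
proof -
  obtain S where S0: "S t = [0]"
    and S: "\<forall>i\<ge>t. step Reg i (S i) (fst (\<sigma> i)) (snd (\<sigma> i)) (S (i + 1))"
    and before: "\<forall>i<t. \<sigma> i = vzero 1 1"
    using assms unfolding runs_def by auto
  have step: "\<exists>a b. S i = [b] \<and> fst (\<sigma> i) = [a] \<and> snd (\<sigma> i) = [b] \<and> S (i + 1) = [a]"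
    if "t \<le> i" for i
    using S[rule_format, OF that] by (auto simp: step_generator_simps)
  show "length (fst (\<sigma> i)) = 1" "length (snd (\<sigma> i)) = 1"
    using step[of i] before by (cases "i < t"; force simp: vzero_def)+
  show "snd (\<sigma> i) = fst (\<sigma> (i - 1))"
  proof (cases "i \<le> t")
    case True
    then have "snd (\<sigma> i) = [0]"
      using before step[of t] S0 by (cases "i < t") (auto simp: vzero_def)
    moreover have "fst (\<sigma> (i - 1)) = [0]" using before True by (simp add: vzero_def)
    ultimately show ?thesis by simp
  next
    case False
    then show ?thesis using step[of i] step[of "i - 1"] by auto
  qed
qed

lemma op_sem_Reg: "op_sem 1 1 (Reg :: 'a::field circ) = kappa ` {([\<alpha>], [\<alpha> * fls_X]) | \<alpha>. True}"
proof
  show "op_sem 1 1 (Reg :: 'a circ) \<subseteq> kappa ` {([\<alpha> :: 'a fls], [\<alpha> * fls_X]) | \<alpha>. True}"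
  proof
    fix \<sigma> assume "\<sigma> \<in> op_sem 1 1 (Reg :: 'a circ)"
    then obtain t where "runs Reg 1 1 t \<sigma>" unfolding op_sem_iff_runs by blast
    then have before: "\<forall>i<t. \<sigma> i = vzero 1 1" unfolding runs_def by blast
    obtain x where "length (fst x) = 1" "length (snd x) = 1" and \<sigma>: "kappa x = \<sigma>"
      using runs_RegD(1,2)[OF \<open>runs Reg 1 1 t \<sigma>\<close>] before by (rule trajectory_eq_kappa)
    then obtain \<alpha> \<beta> where x: "x = ([\<alpha>], [\<beta>])"
      by (cases x) (auto simp: length_Suc_conv)
    have "\<beta> = \<alpha> * fls_X"
    proof (rule fls_eqI)
      fix i
      have "[fls_nth \<beta> i] = [fls_nth \<alpha> (i - 1)]"
        using runs_RegD(3)[OF \<open>runs Reg 1 1 t \<sigma>\<close>, of i] unfolding \<sigma>[symmetric] x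
        by (simp add: kappa_def)
      then show "fls_nth \<beta> i = fls_nth (\<alpha> * fls_X) i" by (simp add: fls_nth_times_X)
    qed
    with \<sigma> x show "\<sigma> \<in> kappa ` {([\<alpha> :: 'a fls], [\<alpha> * fls_X]) | \<alpha>. True}" by blast
  qed
  show "kappa ` {([\<alpha> :: 'a fls], [\<alpha> * fls_X]) | \<alpha>. True} \<subseteq> op_sem 1 1 (Reg :: 'a circ)"
  proof
    fix \<sigma> assume "\<sigma> \<in> kappa ` {([\<alpha> :: 'a fls], [\<alpha> * fls_X]) | \<alpha>. True}"
    then obtain \<alpha> where \<sigma>: "\<sigma> = kappa ([\<alpha>], [\<alpha> * fls_X])" by blast
    obtain t where "t \<le> 0"
      and "\<forall>i<t. kappa ([\<alpha>], [\<alpha> * fls_X]) i = vzero (length [\<alpha>]) (length [\<alpha> * fls_X])"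
      using kappa_eventually_zero[of "([\<alpha>], [\<alpha> * fls_X])"] by auto
    then have before: "\<forall>i<t. kappa ([\<alpha>], [\<alpha> * fls_X]) i = vzero 1 1" by simp
    then have "fls_nth \<alpha> (t - 1) = 0" by (simp add: kappa_def vzero_def)
    then have "runs Reg 1 1 t \<sigma>"
      unfolding runs_def using before
      by (intro exI[of _ "\<lambda>i. [fls_nth \<alpha> (i - 1)]"])
        (simp add: \<sigma> kappa_def fls_nth_times_X step_generator_simps)
    with \<open>t \<le> 0\<close> show "\<sigma> \<in> op_sem 1 1 (Reg :: 'a circ)" unfolding op_sem_iff_runs by blast
  qed
qed

lemma runs_mirror:
  assumes "\<And>i s u v s'. step c' i s u v s' \<longleftrightarrow> step c i s v u s'" "nregs c' = nregs c"
  shows "runs c' m n t \<sigma> \<longleftrightarrow> runs c n m t (prod.swap \<circ> \<sigma>)"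
  unfolding runs_def by (simp add: assms vzero_def prod_eq_iff conj_commute)

lemma op_sem_mirror:
  assumes "\<And>i s u v s'. step c' i s u v s' \<longleftrightarrow> step c i s v u s'" "nregs c' = nregs c"
  shows "op_sem m n c' = (\<lambda>\<sigma>. prod.swap \<circ> \<sigma>) ` op_sem n m c"
proof
  show "op_sem m n c' \<subseteq> (\<lambda>\<sigma>. prod.swap \<circ> \<sigma>) ` op_sem n m c"
  proof
    fix \<sigma> assume "\<sigma> \<in> op_sem m n c'"
    then have "prod.swap \<circ> \<sigma> \<in> op_sem n m c"
      by (simp add: op_sem_iff_runs runs_mirror[OF assms])
    moreover have "\<sigma> = prod.swap \<circ> (prod.swap \<circ> \<sigma>)" by (simp add: fun_eq_iff)
    ultimately show "\<sigma> \<in> (\<lambda>\<sigma>. prod.swap \<circ> \<sigma>) ` op_sem n m c" by blast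
  qed
  show "(\<lambda>\<sigma>. prod.swap \<circ> \<sigma>) ` op_sem n m c \<subseteq> op_sem m n c'"
    by (auto simp: op_sem_iff_runs runs_mirror[OF assms] comp_assoc[symmetric])
qed

lemma kappa_swap: "kappa (prod.swap x) = prod.swap \<circ> kappa x"
  by (simp add: kappa_def fun_eq_iff)

lemma op_sem_RegOp: "op_sem 1 1 (RegOp :: 'a::field circ) = kappa ` {([\<alpha> * fls_X], [\<alpha>]) | \<alpha>. True}"
proof -
  have "op_sem 1 1 RegOp = (\<lambda>\<sigma>. prod.swap \<circ> \<sigma>) ` op_sem 1 1 Reg"
    by (rule op_sem_mirror) (auto simp: step_generator_simps)
  also have "\<dots> = (\<lambda>\<sigma>. prod.swap \<circ> \<sigma>) ` kappa ` {([\<alpha>], [\<alpha> * fls_X]) | \<alpha>. True}"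
    by (simp only: op_sem_Reg)
  also have "\<dots> = kappa ` prod.swap ` {([\<alpha>], [\<alpha> * fls_X]) | \<alpha>. True}"
    by (simp only: image_image kappa_swap)
  also have "prod.swap ` {([\<alpha>], [\<alpha> * fls_X]) | \<alpha>. True} = {([\<alpha> * fls_X], [\<alpha>]) | \<alpha>. True}"
    by auto
  finally show ?thesis .
qed

lemmas op_sem_generators =
  op_sem_Copy op_sem_Disc op_sem_Amp op_sem_Reg op_sem_Add op_sem_Zero op_sem_One
  op_sem_CopyOp op_sem_DiscOp op_sem_AmpOp op_sem_RegOp op_sem_AddOp op_sem_ZeroOp op_sem_OneOp
  op_sem_Id0 op_sem_Id1 op_sem_Sw

theorem theorem3:
  fixes c :: "'k::field circ" and n m :: nat
  assumes "sort c = Some (n, m)"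
  shows "op_sem n m c = kappa ` iota n m (den c)"
  using assms
proof (induction c arbitrary: n m)
  case (Seq c d)
  from Seq.prems obtain k where "sort c = Some (n, k)" "sort d = Some (k, m)"
    unfolding sort_Seq_eq_Some by blast
  with Seq.IH show ?case by (simp del: den.simps add: op_sem_Seq kappa_iota_den_Seq)
next
  case (Par c d)
  from Par.prems obtain n1 m1 n2 m2 where "sort c = Some (n1, m1)" "sort d = Some (n2, m2)"
    and "n = n1 + n2" "m = m1 + m2"
    unfolding sort_Par_eq_Some by blast
  with Par.IH show ?case by (simp del: den.simps add: op_sem_Par kappa_iota_den_Par)
qed (simp_all del: den.simps One_nat_def add: op_sem_generators iota_generators)

end
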